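(* Let $\mathcal P$ be a finite-dimensional Poisson $n$-Lie algebra over an algebraically closed field of characteristic zero. Then $\mathcal P$ is solvable if and only if the ideal $\mathcal P^2=[\mathcal P,\dots,\mathcal P]+\mathcal P\cdot\mathcal P$ is nilpotent.
   Context: A Poisson $n$-Lie algebra is a commutative associative algebra $(\mathcal P,\cdot)$ with an $n$-linear skew-symmetric bracket satisfying the fundamental identity $[x_1,\dots,x_{n-1},[y_1,\dots,y_n]]=\sum_{i=1}^n[y_1,\dots,[x_1,\dots,x_{n-1},y_i],\dots,y_n]$ and the Leibniz rule $[y\cdot z,x_2,\dots,x_n]=y\cdot[z,x_2,\dots,x_n]+z\cdot[y,x_2,\dots,x_n]$. Products/brackets of subspaces are linear spans. For an ideal $\mathcal I$: $\mathcal I^{(1)}=\mathcal I$, $\mathcal I^{(k+1)}=[\mathcal I^{(k)},\mathcal I^{(k)},\mathcal P,\dots,\mathcal P]+\mathcal I^{(k)}\cdot\mathcal I^{(k)}$; $\mathcal I^1=\mathcal I$, $\mathcal I^{k+1}=[\mathcal I^k,\mathcal I,\mathcal P,\dots,\mathcal P]+\mathcal I^k\cdot\mathcal I$. $\mathcal I$ is solvable (resp. nilpotent) if $\mathcal I^{(s)}=0$ (resp. $\mathcal I^s=0$) for some $s$; $\mathcal P$ is solvable if the ideal $\mathcal P$ is. *)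

theory Defs
  imports "HOL-Computational_Algebra.Polynomial"
begin

text \<open>The n-ary bracket is a function br on lists,
  only meaningful on lists of length n.\<close>

definition poisson_nlie ::
  "('k::field \<Rightarrow> 'v::ab_group_add \<Rightarrow> 'v) \<Rightarrow> nat \<Rightarrow> ('v list \<Rightarrow> 'v) \<Rightarrow> ('v \<Rightarrow> 'v \<Rightarrow> 'v) \<Rightarrow> bool"
where
  "poisson_nlie scl n br mul \<longleftrightarrow>
     vector_space scl \<and>
     \<comment> \<open>commutative associative algebra (bilinear product)\<close>
     (\<forall>a x y z. mul (scl a x + y) z = scl a (mul x z) + mul y z) \<and>
     (\<forall>x y. mul x y = mul y x) \<and>
     (\<forall>x y z. mul (mul x y) z = mul x (mul y z)) \<and>
     \<comment> \<open>n-linearity of the bracket\<close>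
     (\<forall>xs ys a x y. length xs + length ys + 1 = n \<longrightarrow>
        br (xs @ (scl a x + y) # ys) = scl a (br (xs @ x # ys)) + br (xs @ y # ys)) \<and>
     \<comment> \<open>skew-symmetry (swapping two adjacent arguments changes the sign)\<close>
     (\<forall>xs ys x y. length xs + length ys + 2 = n \<longrightarrow>
        br (xs @ x # y # ys) = - br (xs @ y # x # ys)) \<and>
     \<comment> \<open>fundamental identity\<close>
     (\<forall>xs ys. length xs + 1 = n \<longrightarrow> length ys = n \<longrightarrow>
        br (xs @ [br ys]) = (\<Sum>i<n. br (ys[i := br (xs @ [ys ! i])]))) \<and>
     \<comment> \<open>Leibniz rule\<close>
     (\<forall>y z xs. length xs + 1 = n \<longrightarrow>
        br (mul y z # xs) = mul y (br (z # xs)) + mul z (br (y # xs)))"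

text \<open>Derived series, 0-based: pderived ... I k is the paper's I^(k+1).\<close>
fun pderived ::
  "('k::field \<Rightarrow> 'v::ab_group_add \<Rightarrow> 'v) \<Rightarrow> nat \<Rightarrow> ('v list \<Rightarrow> 'v) \<Rightarrow> ('v \<Rightarrow> 'v \<Rightarrow> 'v) \<Rightarrow> 'v set \<Rightarrow> nat \<Rightarrow> 'v set"
where
  "pderived scl n br mul I 0 = I"
| "pderived scl n br mul I (Suc k) =
     module.span scl
       ({br (a # b # xs) | a b xs. a \<in> pderived scl n br mul I k \<and> b \<in> pderived scl n br mul I k
                                  \<and> length xs = n - 2}
        \<union> {mul a b | a b. a \<in> pderived scl n br mul I k \<and> b \<in> pderived scl n br mul I k})"

text \<open>Lower central series, 0-based: plower ... I k is the paper's I^(k+1).\<close>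
fun plower ::
  "('k::field \<Rightarrow> 'v::ab_group_add \<Rightarrow> 'v) \<Rightarrow> nat \<Rightarrow> ('v list \<Rightarrow> 'v) \<Rightarrow> ('v \<Rightarrow> 'v \<Rightarrow> 'v) \<Rightarrow> 'v set \<Rightarrow> nat \<Rightarrow> 'v set"
where
  "plower scl n br mul I 0 = I"
| "plower scl n br mul I (Suc k) =
     module.span scl
       ({br (a # b # xs) | a b xs. a \<in> plower scl n br mul I k \<and> b \<in> I \<and> length xs = n - 2}
        \<union> {mul a b | a b. a \<in> plower scl n br mul I k \<and> b \<in> I})"

definition psolvable where
  "psolvable scl n br mul I \<longleftrightarrow> (\<exists>s. pderived scl n br mul I s = {0})"

definition pnilpotent where
  "pnilpotent scl n br mul I \<longleftrightarrow> (\<exists>s. plower scl n br mul I s = {0})"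

definition psquare where
  "psquare scl n br mul =
     module.span scl ({br xs | xs. length xs = n} \<union> {mul a b | a b. True})"

end

theory Submission
  imports Defs
begin

text \<open>If \<open>P\<close> is solvable, the operators \<open>ad X = [X\<^sub>1, \<dots>, X\<^sub>n\<^sub>-\<^sub>1, -]\<close> and \<open>L\<^sub>x = x \<cdot> -\<close>, graded by
  how deep their arguments lie in the derived series, form a chain of families, each absorbing
  the commutators of the previous one, that ends in \<open>0\<close>. A version of Lie's theorem (with Krylov
  flags in place of traces) therefore gives, modulo any invariant subspace \<open>W \<noteq> P\<close>, a common
  eigenvector \<open>u\<close>. Each \<open>L\<^sub>x\<close> has eigenvalue \<open>0\<close> because \<open>x \<cdot> x\<close> lies deeper in the derived series,
  and the eigenvalue of \<open>ad X\<close> is multilinear and alternating in \<open>X\<close> and, by the fundamental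
  identity, vanishes when one argument is a bracket. So \<open>P\<^sup>2\<close> maps \<open>u\<close> into \<open>W\<close> and \<open>W + k u\<close> is
  invariant again. The resulting flag \<open>0 = W\<^sub>0 \<subset> \<dots> \<subset> W\<^sub>d = P\<close> is descended one step at a time
  by the lower central series of \<open>P\<^sup>2\<close>, so \<open>P\<^sup>2\<close> is nilpotent.

  Conversely, the derived series of \<open>P\<close> is that of \<open>P\<^sup>2\<close> shifted by one, and it lies below the
  lower central series of \<open>P\<^sup>2\<close>.\<close>

section \<open>Linear algebra modulo a subspace\<close>

locale char0_alg_closed_vector_space = finite_dimensional_vector_space scale Basis
  for scale :: "'a::{alg_closed_field,field_char_0} \<Rightarrow> 'b::ab_group_add \<Rightarrow> 'b" and Basis
begin

notation scale (infixr \<open>*s\<close> 75)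

sublocale endo: vector_space_pair scale scale ..

abbreviation linear_op :: "('b \<Rightarrow> 'b) \<Rightarrow> bool" where
  "linear_op f \<equiv> Vector_Spaces.linear scale scale f"

lemma linear_opI:
  assumes "\<And>x y. f (x + y) = f x + f y" and "\<And>c x. f (c *s x) = c *s f x"
  shows "linear_op f"
  using assms vector_space_axioms by (simp add: Vector_Spaces.linear_iff)

lemma linear_op_minus_scale: "linear_op A \<Longrightarrow> linear_op (\<lambda>x. A x - c *s x)"
  by (intro endo.linear_compose_sub linear_scale_self)

lemma eigenvalue_mod_unique:
  assumes W: "subspace W" and uW: "u \<notin> W" and a: "v - a *s u \<in> W" and b: "v - b *s u \<in> W"
  shows "a = b"
proof (rule ccontr)
  assume ne: "a \<noteq> b"
  have "(b - a) *s u = (v - a *s u) - (v - b *s u)" by (simp add: scale_left_diff_distrib)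
  also have "\<dots> \<in> W" using subspace_diff[OF W a b] .
  finally have "inverse (b - a) *s ((b - a) *s u) \<in> W" using subspace_scale[OF W] by blast
  then have "u \<in> W" using ne by simp
  then show False using uW by simp
qed

lemma eigen_mod_add:
  assumes W: "subspace W" and "v1 - a *s u \<in> W" "v2 - b *s u \<in> W"
  shows "(v1 + v2) - (a + b) *s u \<in> W"
proof -
  have eq: "(v1 + v2) - (a + b) *s u = (v1 - a *s u) + (v2 - b *s u)"
    by (simp add: scale_left_distrib algebra_simps)
  show ?thesis unfolding eq by (rule subspace_add[OF W assms(2,3)])
qed

lemma eigen_mod_comp:
  assumes W: "subspace W" and lf: "linear_op f" and fW: "\<And>w. w \<in> W \<Longrightarrow> f w \<in> W"
    and fu: "f u - b *s u \<in> W" and v: "v - a *s u \<in> W"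
  shows "f v - (a * b) *s u \<in> W"
proof -
  have eq: "f v - (a * b) *s u = f (v - a *s u) + a *s (f u - b *s u)"
    using lf by (simp add: endo.linear_diff endo.linear_scale scale_right_diff_distrib algebra_simps)
  show ?thesis unfolding eq by (rule subspace_add[OF W fW[OF v] subspace_scale[OF W fu]])
qed

lemma eigen_mod_sum:
  assumes W: "subspace W" and fin: "finite I" and h: "\<And>i. i \<in> I \<Longrightarrow> g i - c i *s u \<in> W"
  shows "(\<Sum>i\<in>I. g i) - (\<Sum>i\<in>I. c i) *s u \<in> W"
  using fin h
proof (induction I rule: finite_induct)
  case empty then show ?case using subspace_0[OF W] by simp
next
  case (insert i I)
  have "(\<Sum>i\<in>insert i I. g i) - (\<Sum>i\<in>insert i I. c i) *s u
      = (g i + (\<Sum>i\<in>I. g i)) - (c i + (\<Sum>i\<in>I. c i)) *s u"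
    using insert(1,2) by simp
  also have "\<dots> \<in> W" by (rule eigen_mod_add[OF W]) (use insert in auto)
  finally show ?case .
qed

lemma eigen_mod_neg:
  assumes W: "subspace W" and "v - a *s u \<in> W" shows "(- v) - (- a) *s u \<in> W"
proof -
  have eq: "(- v) - (- a) *s u = - (v - a *s u)" by (simp add: scale_minus_left)
  show ?thesis unfolding eq by (rule subspace_neg[OF W assms(2)])
qed

lemma linear_op_span_mem:
  assumes "linear_op g" "subspace S" "\<And>x. x \<in> G \<Longrightarrow> g x \<in> S" "x \<in> span G"
  shows "g x \<in> S"
proof -
  have "span G \<subseteq> g -` S"
    using assms(3) endo.linear_subspace_vimage[OF assms(1,2)] by (intro span_minimal) auto
  then show ?thesis using assms(4) by blast
qed

lemma iterate_closed:
  assumes "\<And>x. x \<in> E \<Longrightarrow> f x \<in> E" "u \<in> E"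
  shows "(f^^k) u \<in> E"
  by (induction k) (use assms in auto)

definition krylov :: "'b set \<Rightarrow> ('b \<Rightarrow> 'b) \<Rightarrow> 'b \<Rightarrow> nat \<Rightarrow> 'b set" where
  "krylov W f u k = {x. \<exists>w\<in>W. \<exists>a. x = w + (\<Sum>j<k. a j *s (f^^j) u)}"

lemma krylov_0: "krylov W f u 0 = W"
  by (auto simp: krylov_def)

lemma krylov_superset: "w \<in> W \<Longrightarrow> w \<in> krylov W f u k"
  unfolding krylov_def by (rule CollectI, rule bexI[of _ w], rule exI[of _ "\<lambda>_. 0"]) auto

lemma subspace_krylov:
  assumes "subspace W"
  shows "subspace (krylov W f u k)"
  unfolding subspace_def
proof (intro conjI ballI allI)
  show "0 \<in> krylov W f u k" using krylov_superset subspace_0[OF assms] by blast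
next
  fix x y assume "x \<in> krylov W f u k" "y \<in> krylov W f u k"
  then obtain w a w' b where "w \<in> W" "x = w + (\<Sum>j<k. a j *s (f^^j) u)"
      "w' \<in> W" "y = w' + (\<Sum>j<k. b j *s (f^^j) u)" by (auto simp: krylov_def)
  then have "x + y = (w + w') + (\<Sum>j<k. (a j + b j) *s (f^^j) u)"
    by (simp add: scale_left_distrib sum.distrib algebra_simps)
  then show "x + y \<in> krylov W f u k" using subspace_add[OF assms \<open>w\<in>W\<close> \<open>w'\<in>W\<close>]
    by (auto simp: krylov_def)
next
  fix c x assume "x \<in> krylov W f u k"
  then obtain w a where "w \<in> W" "x = w + (\<Sum>j<k. a j *s (f^^j) u)" by (auto simp: krylov_def)
  then have "c *s x = c *s w + (\<Sum>j<k. (c * a j) *s (f^^j) u)"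
    by (simp add: scale_right_distrib scale_sum_right)
  then show "c *s x \<in> krylov W f u k" using subspace_scale[OF assms \<open>w\<in>W\<close>]
    by (auto simp: krylov_def)
qed

lemma iterate_in_krylov:
  assumes "j < k" "subspace W"
  shows "(f^^j) u \<in> krylov W f u k"
proof -
  have "(\<Sum>i<k. (if i = j then 1 else 0) *s (f^^i) u) = (\<Sum>i<k. if i = j then (f^^i) u else 0)"
    by (rule sum.cong) auto
  also have "\<dots> = (f^^j) u" using assms by simp
  finally show ?thesis unfolding krylov_def using subspace_0[OF assms(2)]
    by (intro CollectI bexI[of _ 0] exI[of _ "\<lambda>i. if i = j then 1 else 0"]) auto
qed

lemma krylov_mono:
  assumes "j \<le> k"
  shows "krylov W f u j \<subseteq> krylov W f u k"
proof
  fix x assume "x \<in> krylov W f u j"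
  then obtain w a where "w \<in> W" "x = w + (\<Sum>i<j. a i *s (f^^i) u)" by (auto simp: krylov_def)
  moreover have "(\<Sum>i<j. a i *s (f^^i) u) = (\<Sum>i<k. (if i < j then a i else 0) *s (f^^i) u)"
    using assms by (intro sum.mono_neutral_cong_left) auto
  ultimately show "x \<in> krylov W f u k" by (auto simp: krylov_def)
qed

lemma linear_op_krylov_mem:
  assumes "linear_op g" "subspace S" "\<And>w. w \<in> W \<Longrightarrow> g w \<in> S"
    and "\<And>j. j < k \<Longrightarrow> g ((f^^j) u) \<in> S" and "x \<in> krylov W f u k"
  shows "g x \<in> S"
proof -
  obtain w a where "w \<in> W" "x = w + (\<Sum>i<k. a i *s (f^^i) u)"
    using assms(5) by (auto simp: krylov_def)
  then have "g x = g w + (\<Sum>i<k. a i *s g ((f^^i) u))"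
    using assms(1) by (simp add: endo.linear_add endo.linear_sum endo.linear_scale)
  then show ?thesis using assms \<open>w\<in>W\<close>
    by (auto intro!: subspace_add subspace_sum subspace_scale)
qed

lemma krylov_step:
  assumes "subspace W" "linear_op f" "\<And>w. w \<in> W \<Longrightarrow> f w \<in> W" "x \<in> krylov W f u k"
  shows "f x \<in> krylov W f u (Suc k)"
proof (rule linear_op_krylov_mem[OF assms(2) subspace_krylov[OF assms(1)] _ _ assms(4)])
  show "f w \<in> krylov W f u (Suc k)" if "w \<in> W" for w
    by (rule krylov_superset[OF assms(3)[OF that]])
  show "f ((f ^^ j) u) \<in> krylov W f u (Suc k)" if "j < k" for j
    using iterate_in_krylov[of "Suc j" "Suc k" W f u] that assms(1) by simp
qed

lemma krylov_length_le_dim: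
  assumes W: "subspace W" and new: "\<And>k. k < N \<Longrightarrow> (f^^k) u \<notin> krylov W f u k"
  shows "N \<le> dim UNIV"
proof -
  have "independent ((\<lambda>k. (f^^k) u) ` {..<M}) \<and> card ((\<lambda>k. (f^^k) u) ` {..<M}) = M"
    if "M \<le> N" for M
    using that
  proof (induction M)
    case 0 then show ?case by (simp add: independent_empty)
  next
    case (Suc M)
    let ?S = "(\<lambda>k. (f^^k) u) ` {..<M}"
    have IH: "independent ?S \<and> card ?S = M" using Suc.IH Suc.prems by simp
    have "?S \<subseteq> krylov W f u M" using iterate_in_krylov[OF _ W] by blast
    then have "span ?S \<subseteq> krylov W f u M" by (rule span_minimal[OF _ subspace_krylov[OF W]])
    moreover have "(f^^M) u \<notin> krylov W f u M" using new Suc.prems by simp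
    ultimately have notin: "(f^^M) u \<notin> span ?S" by blast
    have "(f^^M) u \<notin> ?S" by (metis notin span_base)
    moreover have "(\<lambda>k. (f^^k) u) ` {..<Suc M} = insert ((f^^M) u) ?S"
      by (simp add: lessThan_Suc)
    ultimately show ?case
      using independent_insertI[OF notin conjunct1[OF IH]] card_insert_disjoint[of ?S] IH by simp
  qed
  then have "independent ((\<lambda>k. (f^^k) u) ` {..<N})" "card ((\<lambda>k. (f^^k) u) ` {..<N}) = N"
    by auto
  then show ?thesis using independent_card_le_dim[of "(\<lambda>k. (f^^k) u) ` {..<N}" UNIV] by simp
qed

lemma krylov_stabilises:
  assumes "subspace W" "u \<notin> W"
  obtains m where "m > 0" "(f^^m) u \<in> krylov W f u m" "\<And>k. k < m \<Longrightarrow> (f^^k) u \<notin> krylov W f u k"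
proof -
  have ex: "\<exists>k. (f^^k) u \<in> krylov W f u k"
    using krylov_length_le_dim[OF assms(1), of "Suc (dim UNIV)" f u] by force
  define m where "m = (LEAST k. (f^^k) u \<in> krylov W f u k)"
  have "(f^^m) u \<in> krylov W f u m" unfolding m_def by (rule LeastI_ex[OF ex])
  moreover have "m > 0" using calculation assms by (cases m) (auto simp: krylov_0)
  moreover have "(f^^k) u \<notin> krylov W f u k" if "k < m" for k
    using that unfolding m_def by (rule not_less_Least)
  ultimately show ?thesis using that by blast
qed

lemma krylov_commutator_triangular:
  assumes W: "subspace W" and lB: "linear_op B" and BW: "\<And>w. w \<in> W \<Longrightarrow> B w \<in> W"
    and A0: "A u - \<alpha> *s u \<in> W"
    and comm: "\<And>k. k < m \<Longrightarrow> B (A ((B^^k) u)) - A (B ((B^^k) u)) - c *s (B^^k) u \<in> krylov W B u k"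
    and "k < m"
  shows "A ((B^^Suc k) u) - \<alpha> *s (B^^Suc k) u + (of_nat (Suc k) * c) *s (B^^k) u \<in> krylov W B u k"
  using \<open>k < m\<close>
proof (induction k)
  case 0
  have "A (B u) - \<alpha> *s B u + c *s u = B (A u - \<alpha> *s u) - (B (A u) - A (B u) - c *s u)"
    using lB by (simp add: endo.linear_diff endo.linear_scale algebra_simps)
  also have "\<dots> \<in> W"
    using BW A0 comm[OF 0] subspace_diff[OF W] by (simp add: krylov_0)
  finally show ?case by (simp add: krylov_0)
next
  case (Suc k)
  let ?e = "\<lambda>k. (B^^k) u"
  let ?x = "A (?e (Suc k)) - \<alpha> *s ?e (Suc k) + (of_nat (Suc k) * c) *s ?e k"
  have Bx: "B ?x \<in> krylov W B u (Suc k)"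
    using Suc.IH Suc_lessD[OF Suc.prems] by (intro krylov_step[OF W lB BW]) simp
  have "A (?e (Suc (Suc k))) - \<alpha> *s ?e (Suc (Suc k)) + (of_nat (Suc (Suc k)) * c) *s ?e (Suc k)
      = B ?x - (B (A (?e (Suc k))) - A (B (?e (Suc k))) - c *s ?e (Suc k))"
    using lB by (simp add: endo.linear_diff endo.linear_add endo.linear_scale algebra_simps
        scale_left_distrib) (metis mult_2_right scale_left_distrib)
  also have "\<dots> \<in> krylov W B u (Suc k)"
    using Bx comm[OF Suc.prems] subspace_diff[OF subspace_krylov[OF W]] by blast
  finally show ?case .
qed

text \<open>This replaces the trace argument in Lie's theorem: on the Krylov flag of \<open>B\<close> at \<open>u\<close>, the
  map \<open>A\<close> is triangular with constant diagonal \<open>\<alpha>\<close>, so a commutator \<open>[B, A] = c\<close> would put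
  \<open>m c B\<^sup>m\<^sup>-\<^sup>1 u\<close> into the Krylov space of dimension \<open>m - 1\<close>.\<close>

lemma krylov_commutator_scalar_zero:
  assumes W: "subspace W" and lA: "linear_op A" and lB: "linear_op B"
    and AW: "\<And>w. w \<in> W \<Longrightarrow> A w \<in> W" and BW: "\<And>w. w \<in> W \<Longrightarrow> B w \<in> W"
    and m0: "m > 0" and em: "(B^^m) u \<in> krylov W B u m"
    and ek: "(B^^(m-1)) u \<notin> krylov W B u (m-1)"
    and A0: "A u - \<alpha> *s u \<in> W"
    and comm: "\<And>k. k < m \<Longrightarrow> B (A ((B^^k) u)) - A (B ((B^^k) u)) - c *s (B^^k) u \<in> krylov W B u k"
  shows "c = 0"
proof (rule ccontr)
  assume "c \<noteq> 0"
  let ?e = "\<lambda>k. (B^^k) u"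
  let ?Y = "krylov W B u (m-1)"
  let ?g = "\<lambda>x. A x - \<alpha> *s x"
  note tri = krylov_commutator_triangular[OF W lB BW A0 comm]
  have Y: "subspace ?Y" by (rule subspace_krylov[OF W])
  have "?g (?e m) \<in> ?Y"
  proof (rule linear_op_krylov_mem[OF linear_op_minus_scale[OF lA] Y _ _ em])
    show "?g w \<in> ?Y" if "w \<in> W" for w
      using krylov_superset subspace_diff[OF W AW[OF that] subspace_scale[OF W that]] by blast
    show "?g (?e j) \<in> ?Y" if "j < m" for j
    proof (cases j)
      case 0 then show ?thesis using A0 krylov_superset by simp
    next
      case (Suc i)
      then have i: "i < m - 1" using that by simp
      have "?g (?e (Suc i)) + (of_nat (Suc i) * c) *s ?e i \<in> ?Y"
        using tri[where k=i] i krylov_mono[of i "m-1" W B u] by auto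
      moreover have "(of_nat (Suc i) * c) *s ?e i \<in> ?Y"
        using iterate_in_krylov[OF i W] subspace_scale[OF Y] by blast
      ultimately show ?thesis using Suc subspace_diff[OF Y] by fastforce
    qed
  qed
  moreover have "?g (?e m) + (of_nat m * c) *s ?e (m-1) \<in> ?Y"
    using tri[where k="m-1"] m0 by simp
  ultimately have "(of_nat m * c) *s ?e (m-1) \<in> ?Y"
    using subspace_diff[OF Y] by fastforce
  then have "(inverse (of_nat m * c) * (of_nat m * c)) *s ?e (m-1) \<in> ?Y"
    using subspace_scale[OF Y] scale_scale by metis
  moreover have "of_nat m * c \<noteq> 0" using m0 \<open>c \<noteq> 0\<close> by simp
  ultimately have "?e (m-1) \<in> ?Y" by (metis left_inverse scale_one)
  then show False using ek by simp
qed

definition poly_apply :: "'a poly \<Rightarrow> ('b \<Rightarrow> 'b) \<Rightarrow> 'b \<Rightarrow> 'b" where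
  "poly_apply p f v = (\<Sum>i\<le>degree p. coeff p i *s (f^^i) v)"

lemma poly_apply_upto:
  assumes "degree p \<le> N" shows "poly_apply p f v = (\<Sum>i\<le>N. coeff p i *s (f^^i) v)"
  unfolding poly_apply_def
  by (rule sum.mono_neutral_left) (use assms in \<open>auto simp: coeff_eq_0\<close>)

lemma poly_apply_linear_factor:
  assumes "linear_op f"
  shows "poly_apply ([:-r, 1:] * q) f v = f (poly_apply q f v) - r *s poly_apply q f v"
proof -
  let ?N = "Suc (degree q)"
  have eq: "[:-r, 1:] * q = pCons 0 q - smult r q" by (simp add: algebra_simps)
  have "degree ([:-r, 1:] * q) \<le> ?N"
    using degree_mult_le[of "[:-r, 1:]" q] by simp
  then have "poly_apply ([:-r, 1:] * q) f v = (\<Sum>i\<le>?N. coeff (pCons 0 q - smult r q) i *s (f^^i) v)"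
    using poly_apply_upto eq by metis
  also have "\<dots> = (\<Sum>i\<le>?N. coeff (pCons 0 q) i *s (f^^i) v) - r *s (\<Sum>i\<le>?N. coeff q i *s (f^^i) v)"
    by (simp only: coeff_diff coeff_smult scale_left_diff_distrib sum_subtractf scale_sum_right
        scale_scale)
  also have "(\<Sum>i\<le>?N. coeff (pCons 0 q) i *s (f^^i) v) = (\<Sum>i\<le>degree q. coeff q i *s (f^^(Suc i)) v)"
    by (subst sum.atMost_Suc_shift) simp
  also have "\<dots> = f (poly_apply q f v)"
    unfolding poly_apply_def using assms by (simp add: endo.linear_sum endo.linear_scale)
  also have "(\<Sum>i\<le>?N. coeff q i *s (f^^i) v) = poly_apply q f v"
    by (rule poly_apply_upto[symmetric]) simp
  finally show ?thesis .
qed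

lemma krylov_annihilating_poly:
  assumes W: "subspace W" and uW: "u \<notin> W"
  obtains p where "degree p > 0" "lead_coeff p = 1" "poly_apply p f u \<in> W"
    "(f^^(degree p - 1)) u \<notin> krylov W f u (degree p - 1)"
proof -
  obtain m where m0: "m > 0" and mY: "(f^^m) u \<in> krylov W f u m"
      and mmin: "\<And>k. k < m \<Longrightarrow> (f^^k) u \<notin> krylov W f u k"
    using krylov_stabilises[OF W uW] by blast
  obtain w a where w: "w \<in> W" and em: "(f^^m) u = w + (\<Sum>j<m. a j *s (f^^j) u)"
    using mY by (auto simp: krylov_def)
  define p where "p = monom 1 m - (\<Sum>j<m. monom (a j) j)"
  have cp: "coeff p i = (if i = m then 1 else 0) - (if i < m then a i else 0)" for i
    by (simp add: p_def coeff_sum coeff_monom)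
  have dp: "degree p = m"
  proof (rule antisym)
    show "degree p \<le> m"
      by (rule degree_le) (auto simp: cp)
    show "m \<le> degree p"
      by (rule le_degree) (simp add: cp)
  qed
  have "poly_apply p f u = (\<Sum>i<Suc m. coeff p i *s (f^^i) u)"
    unfolding poly_apply_def dp by (simp add: lessThan_Suc_atMost)
  also have "\<dots> = (\<Sum>i<m. - (a i *s (f^^i) u)) + (f^^m) u"
    by (simp add: cp)
  also have "\<dots> = w" using em by (simp add: sum_negf)
  finally have "poly_apply p f u \<in> W" using w by simp
  moreover have "lead_coeff p = 1" using dp by (simp add: cp)
  ultimately show ?thesis using dp m0 mmin[of "m - 1"] by (intro that[of p]) auto
qed

lemma poly_apply_monic_notin:
  assumes W: "subspace W" and q: "lead_coeff q = 1"
    and new: "(f^^degree q) u \<notin> krylov W f u (degree q)"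
  shows "poly_apply q f u \<notin> W"
proof
  let ?k = "degree q"
  assume "poly_apply q f u \<in> W"
  have "poly_apply q f u = (f^^?k) u + (\<Sum>i<?k. coeff q i *s (f^^i) u)"
    unfolding poly_apply_def using q by (simp add: lessThan_Suc_atMost[symmetric] add.commute)
  then have "(f^^?k) u = poly_apply q f u - (\<Sum>i<?k. coeff q i *s (f^^i) u)" by simp
  also have "\<dots> \<in> krylov W f u ?k"
    by (intro subspace_diff[OF subspace_krylov[OF W]] krylov_superset \<open>poly_apply q f u \<in> W\<close>
        subspace_sum[OF subspace_krylov[OF W]] subspace_scale[OF subspace_krylov[OF W]]
        iterate_in_krylov W) simp
  finally have "(f^^?k) u \<in> krylov W f u ?k" .
  with new show False ..
qed

lemma eigenvector_mod_subspace:
  assumes W: "subspace W" and E: "subspace E" and WE: "W \<subseteq> E" and uE: "u \<in> E" and uW: "u \<notin> W"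
    and lf: "linear_op f" and fE: "\<And>x. x \<in> E \<Longrightarrow> f x \<in> E"
  obtains \<alpha> v where "v \<in> E" "v \<notin> W" "f v - \<alpha> *s v \<in> W"
proof -
  obtain p where dp: "degree p > 0" and lp: "lead_coeff p = 1" and pW: "poly_apply p f u \<in> W"
      and new: "(f^^(degree p - 1)) u \<notin> krylov W f u (degree p - 1)"
    using krylov_annihilating_poly[OF W uW] by blast
  obtain r where "poly p r = 0" using alg_closed_imp_poly_has_root dp by blast
  then obtain q where pq: "p = [:-r, 1:] * q" using poly_eq_0_iff_dvd by (metis dvdE)
  then have "q \<noteq> 0" using dp by auto
  then have dq: "degree q = degree p - 1" using pq degree_mult_eq[of "[:-r, 1:]" q] by simp
  have "lead_coeff q = lead_coeff [:-r, 1:] * lead_coeff q" by simp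
  also have "\<dots> = lead_coeff p" unfolding pq by (rule lead_coeff_mult[symmetric])
  finally have "lead_coeff q = 1" using lp by simp
  then have "poly_apply q f u \<notin> W" using poly_apply_monic_notin[OF W] new dq by metis
  moreover have "poly_apply q f u \<in> E" unfolding poly_apply_def
    by (intro subspace_sum[OF E] subspace_scale[OF E] iterate_closed[OF fE uE])
  moreover have "f (poly_apply q f u) - r *s poly_apply q f u \<in> W"
    using poly_apply_linear_factor[OF lf, of r q u] pW pq by simp
  ultimately show ?thesis using that by blast
qed

subsection \<open>Lie's theorem for chains of operator families\<close>

text \<open>The operator families below are not linear spaces; this replaces closure under brackets.\<close>

definition commutator_in :: "('b \<Rightarrow> 'b) set \<Rightarrow> ('b \<Rightarrow> 'b) \<Rightarrow> ('b \<Rightarrow> 'b) \<Rightarrow> bool" where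
  "commutator_in S f g \<longleftrightarrow>
     (\<exists>hs. set hs \<subseteq> S \<and> (\<forall>v. f (g v) - g (f v) = sum_list (map (\<lambda>h. h v) hs)))"

definition weight_space :: "'b set \<Rightarrow> ('b \<Rightarrow> 'b) set \<Rightarrow> (('b \<Rightarrow> 'b) \<Rightarrow> 'a) \<Rightarrow> 'b set" where
  "weight_space W C \<mu> = {v. \<forall>h\<in>C. h v - \<mu> h *s v \<in> W}"

lemma sum_list_eigen_mod:
  assumes S: "subspace S" and h: "\<And>h. h \<in> set hs \<Longrightarrow> h v - c h *s v \<in> S"
  shows "sum_list (map (\<lambda>h. h v) hs) - sum_list (map c hs) *s v \<in> S"
  using h
proof (induction hs)
  case Nil then show ?case using subspace_0[OF S] by simp
next
  case (Cons h hs)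
  have "sum_list (map (\<lambda>h. h v) (h # hs)) - sum_list (map c (h # hs)) *s v
      = (h v - c h *s v) + (sum_list (map (\<lambda>h. h v) hs) - sum_list (map c hs) *s v)"
    by (simp add: scale_left_distrib algebra_simps)
  also have "\<dots> \<in> S" using Cons by (intro subspace_add[OF S]) auto
  finally show ?case .
qed

lemma eigenspace_mod_subspace:
  assumes W: "subspace W" and E: "subspace E" and f: "linear_op f"
  shows "subspace {y\<in>E. f y - \<alpha> *s y \<in> W}"
proof -
  have "{y\<in>E. f y - \<alpha> *s y \<in> W} = E \<inter> (\<lambda>y. f y - \<alpha> *s y) -` W" by auto
  then show ?thesis
    using subspace_inter[OF E endo.linear_subspace_vimage[OF linear_op_minus_scale[OF f] W]] by simp
qed

context
  fixes W and C0 C1 :: "('b \<Rightarrow> 'b) set"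
  assumes W: "subspace W"
    and ops: "\<And>g. g \<in> C0 \<union> C1 \<Longrightarrow> linear_op g \<and> (\<forall>w\<in>W. g w \<in> W)"
    and ideal: "\<And>f g. f \<in> C0 \<Longrightarrow> g \<in> C1 \<Longrightarrow> commutator_in C1 f g"
    and derived: "\<And>f g. f \<in> C0 \<Longrightarrow> g \<in> C0 \<Longrightarrow> commutator_in C1 f g"
begin

lemma subspace_weight_space: "subspace (weight_space W C1 \<mu>)"
proof -
  have "weight_space W C1 \<mu> = (\<Inter>h\<in>C1. {y\<in>UNIV. h y - \<mu> h *s y \<in> W})"
    by (auto simp: weight_space_def)
  also have "subspace \<dots>"
    using eigenspace_mod_subspace[OF W subspace_UNIV] ops by (intro subspace_Inter) auto
  finally show ?thesis .
qed

lemma weight_space_superset: "W \<subseteq> weight_space W C1 \<mu>"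
  using ops subspace_diff[OF W] subspace_scale[OF W] by (auto simp: weight_space_def)

lemma weight_space_triangular:
  assumes f: "f \<in> C0" and v: "v \<in> weight_space W C1 \<mu>" and h: "h \<in> C1"
  shows "h ((f^^k) v) - \<mu> h *s (f^^k) v \<in> krylov W f v k"
  using h
proof (induction k arbitrary: h)
  case 0 then show ?case using v by (simp add: weight_space_def krylov_0)
next
  case (Suc k)
  let ?e = "(f^^k) v"
  let ?Y = "krylov W f v (Suc k)"
  have lf: "linear_op f" and fW: "\<And>w. w \<in> W \<Longrightarrow> f w \<in> W" using ops f by auto
  obtain hs where hs: "set hs \<subseteq> C1" "\<And>x. f (h x) - h (f x) = sum_list (map (\<lambda>h. h x) hs)"
    using ideal[OF f Suc.prems] unfolding commutator_in_def by blast
  have "f (h ?e - \<mu> h *s ?e) \<in> ?Y"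
    by (rule krylov_step[OF W lf fW Suc.IH[OF Suc.prems]])
  moreover have "sum_list (map (\<lambda>h. h ?e) hs) - sum_list (map \<mu> hs) *s ?e \<in> ?Y"
    using Suc.IH hs(1) krylov_mono[of k "Suc k" W f v]
    by (intro sum_list_eigen_mod[OF subspace_krylov[OF W]]) auto
  moreover have "sum_list (map \<mu> hs) *s ?e \<in> ?Y"
    using iterate_in_krylov[of k "Suc k" W f v] W subspace_scale[OF subspace_krylov[OF W]] by auto
  moreover have "h ((f^^Suc k) v) - \<mu> h *s (f^^Suc k) v
      = f (h ?e - \<mu> h *s ?e) - ((sum_list (map (\<lambda>h. h ?e) hs) - sum_list (map \<mu> hs) *s ?e)
         + sum_list (map \<mu> hs) *s ?e)"
    using hs(2)[of ?e] lf by (simp add: endo.linear_diff endo.linear_scale algebra_simps)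
  ultimately show ?case using subspace_krylov[OF W] by (metis subspace_add subspace_diff)
qed

lemma weight_space_invariant:
  assumes f: "f \<in> C0" and v: "v \<in> weight_space W C1 \<mu>"
  shows "f v \<in> weight_space W C1 \<mu>"
proof (cases "v \<in> W")
  case True then show ?thesis using weight_space_superset ops f by blast
next
  case False
  have lf: "linear_op f" and fW: "\<And>w. w \<in> W \<Longrightarrow> f w \<in> W" using ops f by auto
  show ?thesis unfolding weight_space_def
  proof (intro CollectI ballI)
    fix h assume h: "h \<in> C1"
    have lh: "linear_op h" and hW: "\<And>w. w \<in> W \<Longrightarrow> h w \<in> W" using ops h by auto
    have hv: "h v - \<mu> h *s v \<in> W" using v h unfolding weight_space_def by blast
    obtain hs where hs: "set hs \<subseteq> C1" "\<And>x. f (h x) - h (f x) = sum_list (map (\<lambda>h. h x) hs)"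
      using ideal[OF f h] unfolding commutator_in_def by blast
    obtain m where m0: "m > 0" and mY: "(f^^m) v \<in> krylov W f v m"
        and mmin: "\<And>k. k < m \<Longrightarrow> (f^^k) v \<notin> krylov W f v k"
      using krylov_stabilises[OF W False] by blast
    have "sum_list (map \<mu> hs) = 0"
    proof (rule krylov_commutator_scalar_zero[OF W lh lf hW fW m0 mY _ hv])
      show "(f ^^ (m - 1)) v \<notin> krylov W f v (m - 1)" using mmin m0 by simp
      show "f (h ((f ^^ k) v)) - h (f ((f ^^ k) v)) - sum_list (map \<mu> hs) *s (f ^^ k) v
            \<in> krylov W f v k" for k
        unfolding hs(2)
        by (rule sum_list_eigen_mod[OF subspace_krylov[OF W]])
          (use weight_space_triangular[OF f v] hs(1) in auto)
    qed
    moreover have "sum_list (map (\<lambda>h. h v) hs) - sum_list (map \<mu> hs) *s v \<in> W"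
      by (rule sum_list_eigen_mod[OF W]) (use v hs(1) in \<open>auto simp: weight_space_def\<close>)
    ultimately have s: "sum_list (map (\<lambda>h. h v) hs) \<in> W" by simp
    have "h (f v) - \<mu> h *s f v = f (h v - \<mu> h *s v) - sum_list (map (\<lambda>h. h v) hs)"
      using hs(2)[of v] lf by (simp add: endo.linear_diff endo.linear_scale algebra_simps)
    also have "\<dots> \<in> W" using subspace_diff[OF W fW[OF hv] s] .
    finally show "h (f v) - \<mu> h *s f v \<in> W" .
  qed
qed

lemma eigenspace_invariant_mod:
  assumes f: "f \<in> C0" and f': "f' \<in> C0"
    and E: "E \<subseteq> weight_space W C1 \<mu>" and f'E: "\<And>y. y \<in> E \<Longrightarrow> f' y \<in> E"
    and v0: "v0 \<in> E" "v0 \<notin> W" "f v0 - \<alpha> *s v0 \<in> W"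
    and y: "y \<in> E" "f y - \<alpha> *s y \<in> W"
  shows "f (f' y) - \<alpha> *s f' y \<in> W"
proof -
  have lf: "linear_op f" and fW: "\<And>w. w \<in> W \<Longrightarrow> f w \<in> W" using ops f by auto
  have lf': "linear_op f'" and f'W: "\<And>w. w \<in> W \<Longrightarrow> f' w \<in> W" using ops f' by auto
  obtain hs where hs: "set hs \<subseteq> C1" "\<And>x. f (f' x) - f' (f x) = sum_list (map (\<lambda>h. h x) hs)"
    using derived[OF f f'] unfolding commutator_in_def by blast
  have hs_scalar: "sum_list (map (\<lambda>h. h x) hs) - sum_list (map \<mu> hs) *s x \<in> W" if "x \<in> E" for x
    by (rule sum_list_eigen_mod[OF W]) (use that E hs(1) in \<open>auto simp: weight_space_def\<close>)
  obtain m where m0: "m > 0" and mY: "(f'^^m) v0 \<in> krylov W f' v0 m"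
    and mmin: "\<And>k. k < m \<Longrightarrow> (f'^^k) v0 \<notin> krylov W f' v0 k"
    using krylov_stabilises[OF W v0(2)] by blast
  have "- sum_list (map \<mu> hs) = 0"
  proof (rule krylov_commutator_scalar_zero[OF W lf lf' fW f'W m0 mY _ v0(3)])
    show "(f' ^^ (m - 1)) v0 \<notin> krylov W f' v0 (m - 1)" using mmin m0 by simp
    fix k
    let ?e = "(f'^^k) v0"
    have "?e \<in> E" by (rule iterate_closed[OF f'E v0(1)])
    then have "- (sum_list (map (\<lambda>h. h ?e) hs) - sum_list (map \<mu> hs) *s ?e) \<in> W"
      using hs_scalar subspace_neg[OF W] by blast
    moreover have "f' (f ?e) - f (f' ?e) - (- sum_list (map \<mu> hs)) *s ?e
        = - (sum_list (map (\<lambda>h. h ?e) hs) - sum_list (map \<mu> hs) *s ?e)"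
      using hs(2)[of ?e] by (simp add: algebra_simps)
    ultimately show "f' (f ?e) - f (f' ?e) - (- sum_list (map \<mu> hs)) *s ?e \<in> krylov W f' v0 k"
      using krylov_superset by simp
  qed
  then have s: "sum_list (map (\<lambda>h. h y) hs) \<in> W" using hs_scalar[OF y(1)] by simp
  have "f (f' y) - \<alpha> *s f' y = f' (f y - \<alpha> *s y) + sum_list (map (\<lambda>h. h y) hs)"
    using hs(2)[of y] lf' by (simp add: endo.linear_diff endo.linear_scale algebra_simps)
  also have "\<dots> \<in> W" using subspace_add[OF W f'W[OF y(2)] s] .
  finally show ?thesis .
qed

lemma common_eigenvector_mod:
  assumes "subspace E" "W \<subseteq> E" "E \<subseteq> weight_space W C1 \<mu>" "x \<in> E" "x \<notin> W"
    and "\<And>f y. f \<in> C0 \<Longrightarrow> y \<in> E \<Longrightarrow> f y \<in> E"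
  shows "\<exists>u\<in>E. u \<notin> W \<and> (\<forall>g\<in>C0. \<exists>c. g u - c *s u \<in> W)"
  using assms
proof (induction "dim E" arbitrary: E x rule: less_induct)
  case (less E x)
  show ?case
  proof (cases "\<forall>f\<in>C0. \<exists>\<alpha>. \<forall>y\<in>E. f y - \<alpha> *s y \<in> W")
    case True then show ?thesis using less.prems(4,5) by blast
  next
    case False
    then obtain f where f: "f \<in> C0" and not_scalar: "\<And>\<alpha>. \<exists>y\<in>E. f y - \<alpha> *s y \<notin> W" by blast
    have lf: "linear_op f" and fW: "\<And>w. w \<in> W \<Longrightarrow> f w \<in> W" using ops f by auto
    obtain \<alpha> v0 where v0: "v0 \<in> E" "v0 \<notin> W" "f v0 - \<alpha> *s v0 \<in> W"
      using eigenvector_mod_subspace[OF W less.prems(1,2,4,5) lf less.prems(6)[OF f]] by blast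
    define E' where "E' = {y\<in>E. f y - \<alpha> *s y \<in> W}"
    have E': "subspace E'" unfolding E'_def by (rule eigenspace_mod_subspace[OF W less.prems(1) lf])
    have WE': "W \<subseteq> E'"
      unfolding E'_def using less.prems(2) subspace_diff[OF W] subspace_scale[OF W] fW by blast
    have E'E: "E' \<subseteq> E" unfolding E'_def by blast
    have "E' \<noteq> E" using not_scalar[of \<alpha>] unfolding E'_def by blast
    then have "dim E' < dim E"
      using dim_psubset[of E' E] E'E span_eq_iff[of E'] span_eq_iff[of E] E' less.prems(1)
      by blast
    moreover have "f' y \<in> E'" if f': "f' \<in> C0" and y: "y \<in> E'" for f' y
      using eigenspace_invariant_mod[OF f f' less.prems(3) less.prems(6)[OF f'] v0] y
        less.prems(6)[OF f'] unfolding E'_def by blast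
    moreover have "v0 \<in> E'" unfolding E'_def using v0 by blast
    moreover have "E' \<subseteq> weight_space W C1 \<mu>" using E'E less.prems(3) by blast
    ultimately have "\<exists>u\<in>E'. u \<notin> W \<and> (\<forall>g\<in>C0. \<exists>c. g u - c *s u \<in> W)"
      by (intro less.hyps[of E' v0]) (use E' WE' v0 in auto)
    then show ?thesis using E'E by blast
  qed
qed

lemma lie_step:
  assumes "u0 \<notin> W" and "\<And>g. g \<in> C1 \<Longrightarrow> \<exists>c. g u0 - c *s u0 \<in> W"
  shows "\<exists>u. u \<notin> W \<and> (\<forall>g\<in>C0. \<exists>c. g u - c *s u \<in> W)"
proof -
  define \<mu> where "\<mu> g = (SOME c. g u0 - c *s u0 \<in> W)" for g
  have "u0 \<in> weight_space W C1 \<mu>"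
    unfolding weight_space_def \<mu>_def using someI_ex[OF assms(2)] by blast
  then show ?thesis
    using common_eigenvector_mod[OF subspace_weight_space weight_space_superset _ _ assms(1)]
      weight_space_invariant by blast
qed

end

lemma lie_theorem_mod:
  assumes W: "subspace W" and WU: "W \<noteq> UNIV"
    and ops: "\<And>t g. g \<in> C t \<Longrightarrow> linear_op g \<and> (\<forall>w\<in>W. g w \<in> W)"
    and top: "\<And>g v. g \<in> C T \<Longrightarrow> g v \<in> W"
    and ideal: "\<And>t f g. t < T \<Longrightarrow> f \<in> C t \<Longrightarrow> g \<in> C (Suc t) \<Longrightarrow> commutator_in (C (Suc t)) f g"
    and derived: "\<And>t f g. t < T \<Longrightarrow> f \<in> C t \<Longrightarrow> g \<in> C t \<Longrightarrow> commutator_in (C (Suc t)) f g"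
  shows "\<exists>u. u \<notin> W \<and> (\<forall>g\<in>C 0. \<exists>c. g u - c *s u \<in> W)"
proof -
  have "\<exists>u. u \<notin> W \<and> (\<forall>g\<in>C (T - d). \<exists>c. g u - c *s u \<in> W)" if "d \<le> T" for d
    using that
  proof (induction d)
    case 0
    obtain u where "u \<notin> W" using WU by blast
    then show ?case using top by (intro exI[of _ u]) (auto intro!: exI[of _ 0])
  next
    case (Suc d)
    then obtain u0 where u0: "u0 \<notin> W" "\<forall>g\<in>C (T - d). \<exists>c. g u0 - c *s u0 \<in> W" by auto
    have eq: "T - d = Suc (T - Suc d)" and lt: "T - Suc d < T" using Suc.prems by auto
    show ?case
      by (rule lie_step[OF W _ ideal[OF lt] derived[OF lt] u0(1)]) (use ops u0 eq in auto)
  qed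
  from this[of T] show ?thesis by simp
qed

end

section \<open>Alternating forms obeying the fundamental identity\<close>

lemma take_snoc_nth: "length xs = Suc k \<Longrightarrow> take k xs @ [xs!k] = xs"
  by (metis lessI take_Suc_conv_app_nth take_all order.refl)

lemma biadditive_alternating_antisym:
  fixes H :: "'a::ab_group_add \<Rightarrow> 'a \<Rightarrow> 'c::ab_group_add"
  assumes "\<And>x y b. H (x + y) b = H x b + H y b" and "\<And>a x y. H a (x + y) = H a x + H a y"
    and "\<And>c. H c c = 0"
  shows "H a b = - H b a"
proof -
  have "H (a + b) (a + b) = H a a + H a b + (H b a + H b b)" by (simp add: assms(1,2))
  then have "H a b + H b a = 0" by (simp add: assms(3))
  then show ?thesis by (simp add: eq_neg_iff_add_eq_0)
qed

lemma adjacent_skew_repeat_zero: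
  fixes G :: "'a list \<Rightarrow> 'c::ab_group_add"
  assumes skew: "\<And>zs i. length zs = N \<Longrightarrow> Suc i < N \<Longrightarrow> G (zs[i := zs!Suc i, Suc i := zs!i]) = - G zs"
    and two: "\<And>c::'c. c + c = 0 \<Longrightarrow> c = 0"
  shows "length zs = N \<Longrightarrow> i < j \<Longrightarrow> j < N \<Longrightarrow> zs!i = zs!j \<Longrightarrow> G zs = 0"
proof (induction "j - i" arbitrary: zs j)
  case 0 then show ?case by simp
next
  case (Suc d)
  show ?case
  proof (cases d)
    case 0
    then have j: "j = Suc i" using Suc.hyps(2) Suc.prems(2) by simp
    have "zs[i := zs!Suc i, Suc i := zs!i] = zs" using Suc.prems j by (metis list_update_id)
    then have "G zs + G zs = 0" using skew[of zs i] Suc.prems j by (simp add: eq_neg_iff_add_eq_0)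
    then show ?thesis by (rule two)
  next
    case (Suc d')
    define zs' where "zs' = zs[j - 1 := zs!j, j := zs!(j-1)]"
    have "G zs' = 0"
    proof (rule Suc.hyps)
      show "d = (j - 1) - i" using Suc.hyps(2) by simp
      show "length zs' = N" using Suc.prems by (simp add: zs'_def)
      show "i < j - 1" using Suc.hyps(2) \<open>d = Suc d'\<close> by simp
      show "j - 1 < N" using Suc.prems by simp
      show "zs' ! i = zs' ! (j - 1)"
        using Suc.prems Suc.hyps(2) \<open>d = Suc d'\<close> by (simp add: zs'_def nth_list_update)
    qed
    moreover have "G zs' = - G zs"
      unfolding zs'_def using skew[of zs "j-1"] Suc.prems by simp
    ultimately show ?thesis by simp
  qed
qed

lemma adjacent_skew_swap:
  fixes G :: "'a::ab_group_add list \<Rightarrow> 'c::ab_group_add"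
  assumes skew: "\<And>zs i. length zs = N \<Longrightarrow> Suc i < N \<Longrightarrow> G (zs[i := zs!Suc i, Suc i := zs!i]) = - G zs"
    and two: "\<And>c::'c. c + c = 0 \<Longrightarrow> c = 0"
    and add: "\<And>zs i x y. length zs = N \<Longrightarrow> i < N \<Longrightarrow>
      G (zs[i := x + y]) = G (zs[i := x]) + G (zs[i := y])"
    and len: "length zs = N" and ij: "i < N" "j < N" "i \<noteq> j"
  shows "G (zs[i := zs!j, j := zs!i]) = - G zs"
proof -
  define H where "H a b = G (zs[i := a, j := b])" for a b
  have "H (zs!j) (zs!i) = - H (zs!i) (zs!j)"
  proof (rule biadditive_alternating_antisym[where H = H])
    show "H (x + y) b = H x b + H y b" for x y b
      using add[of "zs[j := b]" i x y] len ij by (simp add: H_def list_update_swap)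
    show "H a (x + y) = H a x + H a y" for a x y
      using add[of "zs[i := a]" j x y] len ij by (simp add: H_def)
    show "H c c = 0" for c
      using adjacent_skew_repeat_zero[OF skew two, where zs = "zs[i := c, j := c]" and i = "min i j"
          and j = "max i j"]
        len ij by (simp add: H_def nth_list_update min_def max_def split: if_splits)
  qed
  then show ?thesis by (simp add: H_def)
qed

text \<open>\<open>F zs xs\<close> models the eigenvalue of \<open>ad ([zs] # xs)\<close> on a common eigenvector, where
  \<open>[zs]\<close> is a bracket; \<open>expand_last\<close> is the fundamental identity read through that eigenvalue.\<close>

locale fi_skew_form =
  fixes m :: nat and F :: "'a::ab_group_add list \<Rightarrow> 'a list \<Rightarrow> 'k::field_char_0"
  assumes add_left: "\<And>zs xs i x y. length zs = Suc (Suc m) \<Longrightarrow> length xs = m \<Longrightarrow> i < Suc (Suc m) \<Longrightarrow>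
      F (zs[i := x + y]) xs = F (zs[i := x]) xs + F (zs[i := y]) xs"
    and add_right: "\<And>zs xs i x y. length zs = Suc (Suc m) \<Longrightarrow> length xs = m \<Longrightarrow> i < m \<Longrightarrow>
      F zs (xs[i := x + y]) = F zs (xs[i := x]) + F zs (xs[i := y])"
    and skew_left: "\<And>zs xs i. length zs = Suc (Suc m) \<Longrightarrow> length xs = m \<Longrightarrow> Suc i < Suc (Suc m) \<Longrightarrow>
      F (zs[i := zs!Suc i, Suc i := zs!i]) xs = - F zs xs"
    and skew_right: "\<And>zs xs i. length zs = Suc (Suc m) \<Longrightarrow> length xs = m \<Longrightarrow> Suc i < m \<Longrightarrow>
      F zs (xs[i := xs!Suc i, Suc i := xs!i]) = - F zs xs"
    and expand_last: "\<And>Z y xs. length Z = Suc m \<Longrightarrow> length xs = m \<Longrightarrow>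
      F (Z @ [y]) xs = (\<Sum>j<m. F (Z @ [xs!j]) (xs[j := y]))"
begin

lemma swap_last_two: "length Z = m \<Longrightarrow> length xs = m \<Longrightarrow> F (Z @ [a, b]) xs = - F (Z @ [b, a]) xs"
  using skew_left[of "Z @ [b, a]" xs m] by (simp add: nth_append list_update_append)

lemma repeat_last_two: "length Z = m \<Longrightarrow> length xs = m \<Longrightarrow> F (Z @ [a, a]) xs = 0"
  using swap_last_two[of Z xs a a] by (simp add: eq_neg_iff_add_eq_0)

lemma contract:
  assumes "m = Suc k"
  shows "fi_skew_form k (\<lambda>zs xs. F (zs @ [w]) (xs @ [w]))"
proof
  fix zs xs :: "'a list" and i :: nat and x y :: 'a
  assume a: "length zs = Suc (Suc k)" "length xs = k"
  show "F (zs[i := x + y] @ [w]) (xs @ [w])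
      = F (zs[i := x] @ [w]) (xs @ [w]) + F (zs[i := y] @ [w]) (xs @ [w])"
    if "i < Suc (Suc k)"
    using add_left[of "zs @ [w]" "xs @ [w]" i x y] a that assms by (simp add: list_update_append)
  show "F (zs @ [w]) (xs[i := x + y] @ [w])
      = F (zs @ [w]) (xs[i := x] @ [w]) + F (zs @ [w]) (xs[i := y] @ [w])"
    if "i < k"
    using add_right[of "zs @ [w]" "xs @ [w]" i x y] a that assms by (simp add: list_update_append)
  show "F (zs[i := zs!Suc i, Suc i := zs!i] @ [w]) (xs @ [w]) = - F (zs @ [w]) (xs @ [w])"
    if "Suc i < Suc (Suc k)"
  proof -
    have "(zs @ [w])[i := (zs @ [w]) ! Suc i, Suc i := (zs @ [w]) ! i]
        = zs[i := zs!Suc i, Suc i := zs!i] @ [w]"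
      using a that by (simp add: list_update_append nth_append)
    then show ?thesis using skew_left[of "zs @ [w]" "xs @ [w]" i] a that assms by simp
  qed
  show "F (zs @ [w]) (xs[i := xs!Suc i, Suc i := xs!i] @ [w]) = - F (zs @ [w]) (xs @ [w])"
    if "Suc i < k"
  proof -
    have "(xs @ [w])[i := (xs @ [w]) ! Suc i, Suc i := (xs @ [w]) ! i]
        = xs[i := xs!Suc i, Suc i := xs!i] @ [w]"
      using a that by (simp add: list_update_append nth_append)
    then show ?thesis using skew_right[of "zs @ [w]" "xs @ [w]" i] a that assms by simp
  qed
next
  fix Z xs :: "'a list" and y :: 'a
  assume a: "length Z = Suc k" "length xs = k"
  have "F (Z @ [y, w]) (xs @ [w]) = - F ((Z @ [w]) @ [y]) (xs @ [w])"
    using swap_last_two[of Z "xs @ [w]" y w] a assms by simp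
  also have "F ((Z @ [w]) @ [y]) (xs @ [w]) = (\<Sum>j<k. F (Z @ [w, xs!j]) (xs[j := y] @ [w]))"
    using expand_last[of "Z @ [w]" "xs @ [w]" y] repeat_last_two[of Z "xs @ [y]" w] a assms
    by (simp add: list_update_append nth_append)
  also have "\<dots> = (\<Sum>j<k. - F (Z @ [xs!j, w]) (xs[j := y] @ [w]))"
  proof (rule sum.cong[OF refl])
    fix j
    show "F (Z @ [w, xs!j]) (xs[j := y] @ [w]) = - F (Z @ [xs!j, w]) (xs[j := y] @ [w])"
      using swap_last_two[of Z "xs[j := y] @ [w]" w "xs!j"] a assms by simp
  qed
  finally show "F ((Z @ [y]) @ [w]) (xs @ [w]) = (\<Sum>j<k. F ((Z @ [xs!j]) @ [w]) (xs[j := y] @ [w]))"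
    by (simp add: sum_negf)
qed

context
  fixes k
  assumes m: "m = Suc k"
    and contracted_zero: "\<And>w zs xs. length zs = Suc (Suc k) \<Longrightarrow> length xs = k \<Longrightarrow>
      F (zs @ [w]) (xs @ [w]) = 0"
begin

lemma zero_if_last_repeated:
  assumes Z: "length Z = Suc m" and ys: "length ys = m" and j: "j < m" "ys!j = a"
  shows "F (Z @ [a]) ys = 0"
proof -
  have zero_at_end: "F (Z @ [a]) xs = 0" if "length xs = m" "xs!k = a" for xs
    using contracted_zero[of Z "take k xs" a] take_snoc_nth[of xs k] that Z m by simp
  show ?thesis
  proof (cases "j = k")
    case True then show ?thesis using zero_at_end ys j by simp
  next
    case False
    have "F (Z @ [a]) (ys[j := ys!k, k := ys!j]) = - F (Z @ [a]) ys"
    proof (rule adjacent_skew_swap[where N = m])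
      show "F (Z @ [a]) (xs[i := xs ! Suc i, Suc i := xs ! i]) = - F (Z @ [a]) xs"
        if "length xs = m" "Suc i < m" for xs i
        using skew_right[of "Z @ [a]" xs i] that Z by simp
      show "F (Z @ [a]) (xs[i := x + y]) = F (Z @ [a]) (xs[i := x]) + F (Z @ [a]) (xs[i := y])"
        if "length xs = m" "i < m" for xs i x y
        using add_right[of "Z @ [a]" xs i x y] that Z by simp
    qed (use ys j False m in auto)
    moreover have "F (Z @ [a]) (ys[j := ys!k, k := ys!j]) = 0"
      using zero_at_end ys j m by simp
    ultimately show ?thesis by simp
  qed
qed

lemma zero_of_contracted_zero:
  assumes zs: "length zs = Suc (Suc m)" and xs: "length xs = m"
  shows "F zs xs = 0"
proof -
  define Z where "Z = butlast zs"
  define y where "y = last zs"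
  have "zs \<noteq> []" using zs by auto
  then have zs_eq: "zs = Z @ [y]" and Z: "length Z = Suc m"
    using zs by (simp_all add: Z_def y_def)
  have antisym: "F (Z @ [a]) (xs[j := b]) = - F (Z @ [b]) (xs[j := a])" if j: "j < m" for a b j
  proof (rule biadditive_alternating_antisym[where H = "\<lambda>p q. F (Z @ [p]) (xs[j := q])"])
    show "F (Z @ [p + p']) (xs[j := q]) = F (Z @ [p]) (xs[j := q]) + F (Z @ [p']) (xs[j := q])"
      for p p' q
      using add_left[of "Z @ [y]" "xs[j := q]" "Suc m" p p'] Z xs by (simp add: list_update_append)
    show "F (Z @ [p]) (xs[j := q + q']) = F (Z @ [p]) (xs[j := q]) + F (Z @ [p]) (xs[j := q'])"
      for p q q'
      using add_right[of "Z @ [p]" xs j q q'] Z xs j by simp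
    show "F (Z @ [c]) (xs[j := c]) = 0" for c
      using zero_if_last_repeated[of Z "xs[j := c]" j c] Z xs j by simp
  qed
  have "F (Z @ [y]) xs = (\<Sum>j<m. F (Z @ [xs!j]) (xs[j := y]))" by (rule expand_last[OF Z xs])
  also have "\<dots> = (\<Sum>j<m. - F (Z @ [y]) xs)"
  proof (rule sum.cong[OF refl])
    fix j assume "j \<in> {..<m}"
    then show "F (Z @ [xs!j]) (xs[j := y]) = - F (Z @ [y]) xs"
      using antisym[of j "xs!j" y] by simp
  qed
  finally have "F (Z @ [y]) xs + of_nat m * F (Z @ [y]) xs = 0"
    by (simp add: eq_neg_iff_add_eq_0)
  then have "(1 + of_nat m) * F (Z @ [y]) xs = 0" by (simp add: distrib_right)
  moreover have "(1 + of_nat m :: 'k) \<noteq> 0"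
    by (metis of_nat_Suc of_nat_eq_0_iff nat.distinct(1) add.commute)
  ultimately show ?thesis using zs_eq by simp
qed

end

end

lemma fi_skew_form_zero:
  "fi_skew_form m F \<Longrightarrow> length zs = Suc (Suc m) \<Longrightarrow> length xs = m \<Longrightarrow> F zs xs = 0"
proof (induction m arbitrary: F zs xs)
  case 0
  then have "zs = butlast zs @ [last zs]"
    by (metis append_butlast_last_id list.size(3) nat.distinct(1))
  then show ?case
    using fi_skew_form.expand_last[OF 0(1), where Z = "butlast zs" and y = "last zs" and xs = xs] 0
    by simp
next
  case (Suc m)
  interpret fi_skew_form "Suc m" F by (rule Suc.prems(1))
  show ?case
  proof (rule zero_of_contracted_zero[OF refl _ Suc.prems(2,3)])
    show "F (zs @ [w]) (xs @ [w]) = 0" if "length zs = Suc (Suc m)" "length xs = m" for w zs xs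
      using Suc.IH[OF contract[OF refl]] that by blast
  qed
qed

section \<open>Nilpotency of the square implies solvability\<close>

context vector_space
begin

lemma pderived_UNIV_Suc:
  assumes n2: "2 \<le> n"
  shows "pderived scale n br mul UNIV (Suc k) = pderived scale n br mul (psquare scale n br mul) k"
proof (induction k)
  case 0
  have "{br (a # b # xs) |a b xs. a \<in> UNIV \<and> b \<in> UNIV \<and> length xs = n - 2}
      = {br xs | xs. length xs = n}"
  proof (intro equalityI subsetI)
    fix x assume "x \<in> {br xs | xs. length xs = n}"
    then obtain zs where zs: "x = br zs" "length zs = n" by blast
    then have "zs = zs!0 # zs!1 # drop 2 zs" using n2 by (cases zs; cases "tl zs") auto
    then show "x \<in> {br (a # b # xs) |a b xs. a \<in> UNIV \<and> b \<in> UNIV \<and> length xs = n - 2}"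
      using zs by (intro CollectI exI[of _ "zs!0"] exI[of _ "zs!1"] exI[of _ "drop 2 zs"]) auto
  qed (use n2 in force)
  then show ?case by (simp add: psquare_def)
next
  case (Suc k)
  then show ?case by (simp only: pderived.simps(2))
qed

lemma pderived_square_subset:
  assumes n2: "2 \<le> n"
  shows "pderived scale n br mul (psquare scale n br mul) k \<subseteq> psquare scale n br mul"
proof (cases k)
  case (Suc k')
  have "x \<in> psquare scale n br mul" if "x = br (a # b # xs)" "length xs = n - 2" for x a b xs
    unfolding psquare_def using that n2
    by (intro span_base UnI1 CollectI exI[of _ "a # b # xs"]) auto
  moreover have "mul a b \<in> psquare scale n br mul" for a b
    unfolding psquare_def by (intro span_base UnI2) blast
  ultimately show ?thesis unfolding Suc pderived.simps(2)
    by (intro span_minimal) (auto simp: psquare_def)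
qed simp

lemma pderived_subset_plower:
  assumes n2: "2 \<le> n"
  shows "pderived scale n br mul (psquare scale n br mul) k
    \<subseteq> plower scale n br mul (psquare scale n br mul) k"
proof (induction k)
  case (Suc k)
  show ?case unfolding pderived.simps(2) plower.simps(2)
    by (rule span_mono) (use Suc.IH pderived_square_subset[OF n2] in blast)
qed simp

lemma pnilpotent_square_imp_psolvable:
  assumes "2 \<le> n" and "pnilpotent scale n br mul (psquare scale n br mul)"
  shows "psolvable scale n br mul UNIV"
proof -
  obtain s where "plower scale n br mul (psquare scale n br mul) s = {0}"
    using assms(2) unfolding pnilpotent_def by blast
  then have "pderived scale n br mul UNIV (Suc s) \<subseteq> {0}"
    using pderived_UNIV_Suc[OF assms(1)] pderived_subset_plower[OF assms(1)] by blast
  moreover have "0 \<in> pderived scale n br mul UNIV (Suc s)" by (simp add: span_zero)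
  ultimately show ?thesis unfolding psolvable_def by blast
qed

end

section \<open>Finite-dimensional Poisson n-Lie algebras\<close>

locale fd_poisson_nlie = char0_alg_closed_vector_space scl Basis
  for scl :: "'k::{alg_closed_field,field_char_0} \<Rightarrow> 'v::ab_group_add \<Rightarrow> 'v" and Basis +
  fixes n :: nat and br :: "'v list \<Rightarrow> 'v" and mul :: "'v \<Rightarrow> 'v \<Rightarrow> 'v"
  assumes n2: "2 \<le> n" and poisson: "poisson_nlie scl n br mul"
begin

notation scl (infixr \<open>*s\<close> 75)

abbreviation square :: "'v set" where
  "square \<equiv> psquare scl n br mul"

lemma mul_linear_left: "mul (a *s x + y) z = a *s mul x z + mul y z"
  using poisson unfolding poisson_nlie_def by (elim conjE) blast

lemma mul_commute: "mul x y = mul y x"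
  using poisson unfolding poisson_nlie_def by (elim conjE) blast

lemma mul_assoc: "mul (mul x y) z = mul x (mul y z)"
  using poisson unfolding poisson_nlie_def by (elim conjE) blast

lemma br_multilinear: "length xs + length ys + 1 = n \<Longrightarrow>
    br (xs @ (a *s x + y) # ys) = a *s br (xs @ x # ys) + br (xs @ y # ys)"
  using poisson unfolding poisson_nlie_def by (elim conjE) blast

lemma br_skew: "length xs + length ys + 2 = n \<Longrightarrow> br (xs @ x # y # ys) = - br (xs @ y # x # ys)"
  using poisson unfolding poisson_nlie_def by (elim conjE) blast

lemma fundamental_identity: "length xs + 1 = n \<Longrightarrow> length ys = n \<Longrightarrow>
    br (xs @ [br ys]) = (\<Sum>i<n. br (ys[i := br (xs @ [ys ! i])]))"
  using poisson unfolding poisson_nlie_def by (elim conjE) blast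

lemma leibniz: "length xs + 1 = n \<Longrightarrow> br (mul y z # xs) = mul y (br (z # xs)) + mul z (br (y # xs))"
  using poisson unfolding poisson_nlie_def by (elim conjE) blast

lemma double_eq_zero: "(c::'v) + c = 0 \<Longrightarrow> c = 0"
proof -
  assume "c + c = 0"
  then have "(2::'k) *s c = 0" by (metis one_add_one scale_left_distrib scale_one)
  then show "c = 0" by simp
qed

lemma linear_op_mul_left: "linear_op (\<lambda>x. mul x c)"
  using mul_linear_left[of 1 _ _ c] mul_linear_left[of _ _ 0 c]
  by (intro linear_opI) (simp_all, metis add_0_right add_left_cancel scale_zero_right)

lemma linear_op_mul_right: "linear_op (mul c)"
proof -
  have "(\<lambda>x. mul x c) = mul c" by (rule ext) (rule mul_commute)
  then show ?thesis using linear_op_mul_left[of c] by simp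
qed

lemma mul_zero_left: "mul 0 z = 0"
  and mul_neg_left: "mul (- x) z = - mul x z"
  using endo.linear_0[OF linear_op_mul_left] endo.linear_neg[OF linear_op_mul_left] by auto

lemma mul_zero_right: "mul z 0 = 0"
  and mul_add_right: "mul z (x + y) = mul z x + mul z y"
  and mul_scale_right: "mul z (a *s x) = a *s mul z x"
  and mul_neg_right: "mul z (- x) = - mul z x"
  using endo.linear_0[OF linear_op_mul_right] endo.linear_add[OF linear_op_mul_right]
    endo.linear_scale[OF linear_op_mul_right] endo.linear_neg[OF linear_op_mul_right] by auto

lemma linear_op_br_at:
  assumes "length zs = n" "i < n"
  shows "linear_op (\<lambda>x. br (zs[i := x]))"
proof (rule linear_opI)
  have split: "zs[i := x] = take i zs @ x # drop (Suc i) zs" for x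
    using assms by (simp add: upd_conv_take_nth_drop)
  have lin: "br (zs[i := a *s x + y]) = a *s br (zs[i := x]) + br (zs[i := y])" for a x y
    unfolding split using assms by (intro br_multilinear) simp
  show "br (zs[i := x + y]) = br (zs[i := x]) + br (zs[i := y])" for x y
    using lin[of 1 x y] by simp
  show "br (zs[i := c *s x]) = c *s br (zs[i := x])" for c x
    using lin[of c x 0] lin[of 1 0 0] by simp
qed

lemma br_add: "length zs = n \<Longrightarrow> i < n \<Longrightarrow> br (zs[i := x + y]) = br (zs[i := x]) + br (zs[i := y])"
  and br_neg: "length zs = n \<Longrightarrow> i < n \<Longrightarrow> br (zs[i := - x]) = - br (zs[i := x])"
  using endo.linear_add[OF linear_op_br_at] endo.linear_neg[OF linear_op_br_at] by auto

lemma br_zero: "length zs = n \<Longrightarrow> i < n \<Longrightarrow> zs!i = 0 \<Longrightarrow> br zs = 0"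
  using endo.linear_0[OF linear_op_br_at, of zs i] by (metis list_update_id)

lemma br_adjacent_swap:
  "length zs = n \<Longrightarrow> Suc i < n \<Longrightarrow> br (zs[i := zs!Suc i, Suc i := zs!i]) = - br zs"
proof -
  assume a: "length zs = n" "Suc i < n"
  define xs where "xs = take i zs"
  define r where "r = drop (Suc (Suc i)) zs"
  have zs: "zs = xs @ zs!i # zs!Suc i # r"
    unfolding xs_def r_def using a by (metis Cons_nth_drop_Suc Suc_lessD append_take_drop_id)
  have "length xs = i" unfolding xs_def using a by simp
  then have "zs[i := zs!Suc i, Suc i := zs!i] = xs @ zs!Suc i # zs!i # r"
    by (subst zs) (simp add: list_update_append)
  moreover have "br (xs @ zs!i # zs!Suc i # r) = - br (xs @ zs!Suc i # zs!i # r)"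
    by (rule br_skew) (use a zs in \<open>simp add: xs_def r_def\<close>)
  ultimately show ?thesis using zs by simp
qed

lemma br_swap: "length zs = n \<Longrightarrow> i < n \<Longrightarrow> j < n \<Longrightarrow> i \<noteq> j \<Longrightarrow> br (zs[i := zs!j, j := zs!i]) = - br zs"
  by (rule adjacent_skew_swap[where N=n and G=br, OF br_adjacent_swap double_eq_zero br_add])

lemma split_first_two: "length ys = n \<Longrightarrow> ys = ys!0 # ys!1 # drop 2 ys"
  using n2 by (cases ys; cases "tl ys") auto

lemma br_mem_move_entry:
  assumes S: "\<And>x. x \<in> S \<Longrightarrow> - x \<in> S" and len: "length zs = n" and ip: "i < n" "p < n"
    and moved: "\<And>zs'. length zs' = n \<Longrightarrow> zs'!p = zs!i \<Longrightarrow> br zs' \<in> S"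
  shows "br zs \<in> S"
proof (cases "i = p")
  case True then show ?thesis using moved len by blast
next
  case False
  let ?z = "zs[i := zs!p, p := zs!i]"
  have "br ?z \<in> S" using moved[of ?z] len ip by simp
  then show ?thesis using S[of "br ?z"] br_swap[OF len ip False] by simp
qed

lemma br_mem_move_two_entries:
  assumes S: "\<And>x. x \<in> S \<Longrightarrow> - x \<in> S" and len: "length zs = n" and ij: "i < n" "j < n" "i \<noteq> j"
    and pq: "p < n" "q < n" "p \<noteq> q"
    and moved: "\<And>zs'. length zs' = n \<Longrightarrow> zs'!p = zs!i \<Longrightarrow> zs'!q = zs!j \<Longrightarrow> br zs' \<in> S"
  shows "br zs \<in> S"
proof -
  define zs1 where "zs1 = (if i = p then zs else zs[i := zs!p, p := zs!i])"
  define j1 where "j1 = (if i = p then j else if j = p then i else j)"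
  have l1: "length zs1 = n" unfolding zs1_def using len by simp
  have b1: "br zs1 = br zs \<or> br zs1 = - br zs"
    unfolding zs1_def using br_swap[OF len ij(1) pq(1)] by auto
  have p1: "zs1!p = zs!i" unfolding zs1_def using len ij pq by auto
  have j1: "j1 \<noteq> p" "j1 < n" "zs1!j1 = zs!j"
    unfolding zs1_def j1_def using len ij pq by (auto simp: nth_list_update)
  define zs2 where "zs2 = (if j1 = q then zs1 else zs1[j1 := zs1!q, q := zs1!j1])"
  have l2: "length zs2 = n" unfolding zs2_def using l1 by simp
  have b2: "br zs2 = br zs1 \<or> br zs2 = - br zs1"
    unfolding zs2_def using br_swap[OF l1 j1(2) pq(2)] by auto
  have "zs2!p = zs!i" "zs2!q = zs!j"
    unfolding zs2_def using l1 j1 pq p1 by (auto simp: nth_list_update)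
  then have "br zs2 \<in> S" using moved[OF l2] by blast
  then show ?thesis using b1 b2 S by (metis minus_minus)
qed

abbreviation der :: "nat \<Rightarrow> 'v set" where
  "der k \<equiv> pderived scl n br mul UNIV k"

definition derived_gens :: "nat \<Rightarrow> 'v set" where
  "derived_gens k = {br (a # b # xs) | a b xs. a \<in> der k \<and> b \<in> der k \<and> length xs = n - 2}
     \<union> {mul a b | a b. a \<in> der k \<and> b \<in> der k}"

definition poisson_ideal :: "'v set \<Rightarrow> bool" where
  "poisson_ideal I \<longleftrightarrow>
     (\<forall>zs i. length zs = n \<longrightarrow> i < n \<longrightarrow> zs!i \<in> I \<longrightarrow> br zs \<in> I) \<and> (\<forall>a b. a \<in> I \<longrightarrow> mul a b \<in> I)"

lemma der_Suc: "der (Suc k) = span (derived_gens k)"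
  unfolding derived_gens_def by simp

lemma subspace_der: "subspace (der k)"
  by (cases k) (auto simp: der_Suc)

lemma br_update_mem_derived_span:
  assumes ys: "length ys = n" "ys!0 \<in> der k" "ys!1 \<in> der k" and c: "l < 2 \<Longrightarrow> c \<in> der k"
  shows "br (ys[l := c]) \<in> span (derived_gens k)"
proof -
  have gen: "br (a # b # xs) \<in> span (derived_gens k)"
    if "a \<in> der k" "b \<in> der k" "length xs = n - 2" for a b xs
    unfolding derived_gens_def using that
    by (intro span_base UnI1 CollectI exI[of _ a] exI[of _ b] exI[of _ xs]) auto
  have ys_eq: "ys = ys!0 # ys!1 # drop 2 ys" using split_first_two ys(1) by blast
  consider "l = 0" | "l = 1" | l' where "l = Suc (Suc l')" by (metis One_nat_def not0_implies_Suc)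
  then show ?thesis
  proof cases
    case 1
    then have "ys[l := c] = c # ys!1 # drop 2 ys" using ys_eq by (metis list_update_code(2))
    then show ?thesis using gen c ys 1 by simp
  next
    case 2
    then have "ys[l := c] = ys!0 # c # drop 2 ys" using ys_eq
      by (metis One_nat_def list_update_code(2) list_update_code(3))
    then show ?thesis using gen c ys 2 by simp
  next
    case 3
    then have "ys[l := c] = ys!0 # ys!1 # (drop 2 ys)[l' := c]"
      using ys_eq by (metis list_update_code(3))
    moreover have "length ((drop 2 ys)[l' := c]) = n - 2" using ys(1) by simp
    ultimately show ?thesis using gen ys by simp
  qed
qed

lemma br_br_mem_derived_span:
  assumes I: "poisson_ideal (der k)"
    and P: "length P = n - 1" and ys: "length ys = n" "ys!0 \<in> der k" "ys!1 \<in> der k"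
  shows "br (P @ [br ys]) \<in> span (derived_gens k)"
proof -
  have "br (P @ [br ys]) = (\<Sum>l<n. br (ys[l := br (P @ [ys ! l])]))"
    by (rule fundamental_identity) (use P ys n2 in auto)
  also have "\<dots> \<in> span (derived_gens k)"
  proof (rule subspace_sum[OF subspace_span])
    fix l
    show "br (ys[l := br (P @ [ys ! l])]) \<in> span (derived_gens k)"
    proof (rule br_update_mem_derived_span[OF ys])
      assume "l < 2"
      then have "ys!l \<in> der k" using ys by (cases l) auto
      moreover have "length (P @ [ys!l]) = n" "n - 1 < n" "(P @ [ys!l]) ! (n - 1) = ys!l"
        using P n2 by (auto simp: nth_append)
      ultimately show "br (P @ [ys!l]) \<in> der k" using I unfolding poisson_ideal_def by metis
    qed
  qed
  finally show ?thesis .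
qed

lemma br_mem_der_Suc:
  assumes I: "poisson_ideal (der k)" and zs: "length zs = n" "i < n" "zs!i \<in> der (Suc k)"
  shows "br zs \<in> der (Suc k)"
proof -
  let ?S = "span (derived_gens k)"
  have I1: "br zs \<in> der k" if "length zs = n" "i < n" "zs!i \<in> der k" for zs i
    using I that unfolding poisson_ideal_def by blast
  have gen_mul: "mul a b \<in> ?S" if "a \<in> der k" "b \<in> der k" for a b
    using that by (auto intro!: span_base simp: derived_gens_def)
  have "zs!i \<in> span (derived_gens k)" using zs(3) by (simp only: der_Suc)
  then have "(\<lambda>x. br (zs[i := x])) (zs!i) \<in> ?S"
  proof (rule linear_op_span_mem[OF linear_op_br_at[OF zs(1,2)] subspace_span, rotated])
    fix x assume "x \<in> derived_gens k"
    then consider (B) a b xs where "x = br (a # b # xs)" "a \<in> der k" "b \<in> der k" "length xs = n - 2"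
      | (M) a b where "x = mul a b" "a \<in> der k" "b \<in> der k" unfolding derived_gens_def by blast
    then show "br (zs[i := x]) \<in> ?S"
    proof cases
      case B
      show ?thesis
      proof (rule br_mem_move_entry[OF span_neg _ zs(2), where p = "n - 1"])
        show "length (zs[i := x]) = n" "n - 1 < n" using zs n2 by auto
        fix zs' assume l: "length zs' = n" and e: "zs' ! (n - 1) = zs[i := x] ! i"
        have "zs' = take (n - 1) zs' @ [x]"
          using take_snoc_nth[of zs' "n - 1"] l e zs n2 by simp
        moreover have "br (take (n - 1) zs' @ [br (a # b # xs)]) \<in> ?S"
          by (rule br_br_mem_derived_span[OF I]) (use l B n2 in auto)
        ultimately show "br zs' \<in> ?S" using B by metis
      qed
    next
      case M
      show ?thesis
      proof (rule br_mem_move_entry[OF span_neg _ zs(2), where p = 0])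
        show "length (zs[i := x]) = n" "0 < n" using zs n2 by auto
        fix zs' assume l: "length zs' = n" and e: "zs' ! 0 = zs[i := x] ! i"
        have zz: "zs' = x # tl zs'" using l e zs n2 by (cases zs') auto
        have lt: "length (tl zs') + 1 = n" using l n2 by simp
        have "br (mul a b # tl zs') = mul a (br (b # tl zs')) + mul b (br (a # tl zs'))"
          by (rule leibniz[OF lt])
        moreover have "br (b # tl zs') \<in> der k" "br (a # tl zs') \<in> der k"
          using I1[of "_ # tl zs'" 0] lt M n2 by auto
        ultimately have "br (mul a b # tl zs') \<in> ?S"
          using gen_mul M by (simp add: span_add)
        then show "br zs' \<in> ?S" using zz M by metis
      qed
    qed
  qed
  then show ?thesis by (simp only: der_Suc list_update_id)
qed

lemma mul_mem_der_Suc: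
  assumes I: "poisson_ideal (der k)" and a: "a \<in> der (Suc k)"
  shows "mul a c \<in> der (Suc k)"
proof -
  let ?S = "span (derived_gens k)"
  have I1: "br zs \<in> der k" if "length zs = n" "i < n" "zs!i \<in> der k" for zs i
    using I that unfolding poisson_ideal_def by blast
  have I2: "mul a b \<in> der k" if "a \<in> der k" for a b
    using I that unfolding poisson_ideal_def by blast
  have gen_br: "br (a # b # xs) \<in> ?S" if "a \<in> der k" "b \<in> der k" "length xs = n - 2" for a b xs
    using that by (auto intro!: span_base simp: derived_gens_def)
  have gen_mul: "mul a b \<in> ?S" if "a \<in> der k" "b \<in> der k" for a b
    using that by (auto intro!: span_base simp: derived_gens_def)
  have "a \<in> span (derived_gens k)" using a by (simp only: der_Suc)
  then have "(\<lambda>x. mul x c) a \<in> ?S"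
  proof (rule linear_op_span_mem[OF linear_op_mul_left subspace_span, rotated])
    fix x assume "x \<in> derived_gens k"
    then consider (B) a b xs where "x = br (a # b # xs)" "a \<in> der k" "b \<in> der k" "length xs = n - 2"
      | (M) a b where "x = mul a b" "a \<in> der k" "b \<in> der k" unfolding derived_gens_def by blast
    then show "mul x c \<in> ?S"
    proof cases
      case B
      have "br (mul c a # b # xs) = mul c (br (a # b # xs)) + mul a (br (c # b # xs))"
        by (rule leibniz) (use B n2 in simp)
      then have "mul x c = br (mul c a # b # xs) - mul a (br (c # b # xs))"
        using B by (simp add: mul_commute[of c] algebra_simps)
      moreover have "br (mul c a # b # xs) \<in> ?S"
        using gen_br I2[of a c] B by (simp add: mul_commute[of c])
      moreover have "mul a (br (c # b # xs)) \<in> ?S"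
        using gen_mul[OF B(2) I1[of "c # b # xs" 1]] B n2 by simp
      ultimately show ?thesis by (simp add: span_diff)
    next
      case M
      then show ?thesis using gen_mul I2 mul_assoc[of a b c] by simp
    qed
  qed
  then show ?thesis by (simp only: der_Suc)
qed

lemma poisson_ideal_der: "poisson_ideal (der k)"
proof (induction k)
  case 0 then show ?case by (simp add: poisson_ideal_def)
next
  case (Suc k)
  then show ?case unfolding poisson_ideal_def[of "der (Suc k)"]
    using br_mem_der_Suc mul_mem_der_Suc by blast
qed

lemma br_mem_der: "length zs = n \<Longrightarrow> i < n \<Longrightarrow> zs!i \<in> der k \<Longrightarrow> br zs \<in> der k"
  using poisson_ideal_der unfolding poisson_ideal_def by blast

lemma mul_mem_der_Suc_of_two: "a \<in> der k \<Longrightarrow> b \<in> der k \<Longrightarrow> mul a b \<in> der (Suc k)"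
  unfolding der_Suc by (rule span_base) (auto simp: derived_gens_def)

lemma br_mem_der_Suc_of_two:
  assumes "length zs = n" "i < n" "j < n" "i \<noteq> j" "zs!i \<in> der k" "zs!j \<in> der k"
  shows "br zs \<in> der (Suc k)"
proof (rule br_mem_move_two_entries[where p = 0 and q = 1, OF _ assms(1-4)])
  show "x \<in> der (Suc k) \<Longrightarrow> - x \<in> der (Suc k)" for x by (rule subspace_neg[OF subspace_der])
  show "0 < n" "1 < n" "0 \<noteq> (1::nat)" using n2 by auto
  fix zs' assume l: "length zs' = n" and e: "zs'!0 = zs!i" "zs'!1 = zs!j"
  have "br (zs'!0 # zs'!1 # drop 2 zs') \<in> derived_gens k"
    unfolding derived_gens_def using e assms l
    by (intro UnI1 CollectI exI[of _ "zs!i"] exI[of _ "zs!j"] exI[of _ "drop 2 zs'"]) auto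
  then show "br zs' \<in> der (Suc k)"
    unfolding der_Suc using split_first_two[OF l] by (metis span_base)
qed


abbreviation ad :: "'v list \<Rightarrow> 'v \<Rightarrow> 'v" where
  "ad X \<equiv> \<lambda>v. br (X @ [v])"

lemma br_swap_first_last:
  assumes l: "length xs = n - 1"
  shows "br (xs @ [w]) = - br (w # tl xs @ [xs!0])"
proof -
  obtain x0 r where xs: "xs = x0 # r" using l n2 by (cases xs) auto
  have lr: "length r = n - 2" using l xs by simp
  let ?z = "xs @ [w]"
  have lz: "length ?z = n" using l n2 by simp
  have "?z[0 := ?z!(n-1), n-1 := ?z!0] = w # r @ [x0]"
  proof -
    have n1: "n - 1 = Suc (length r)" using lr n2 by simp
    show ?thesis unfolding n1 using xs by (simp add: nth_append list_update_append)
  qed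
  moreover have "br (?z[0 := ?z!(n-1), n-1 := ?z!0]) = - br ?z"
    by (rule br_swap) (use lz n2 in auto)
  ultimately show ?thesis using xs by simp
qed

lemma leibniz_last:
  assumes l: "length xs = n - 1"
  shows "br (xs @ [mul y z]) = mul y (br (xs @ [z])) + mul z (br (xs @ [y]))"
proof -
  let ?R = "tl xs @ [xs!0]"
  have lR: "length ?R + 1 = n" using l n2 by simp
  have "br (xs @ [mul y z]) = - br (mul y z # ?R)" by (rule br_swap_first_last[OF l])
  also have "\<dots> = - (mul y (br (z # ?R)) + mul z (br (y # ?R)))" by (simp add: leibniz[OF lR])
  also have "br (z # ?R) = - br (xs @ [z])" using br_swap_first_last[OF l, of z] by simp
  also have "br (y # ?R) = - br (xs @ [y])" using br_swap_first_last[OF l, of y] by simp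
  finally show ?thesis by (simp add: mul_neg_right)
qed

lemma linear_op_ad: "length X = n - 1 \<Longrightarrow> linear_op (ad X)"
proof -
  assume l: "length X = n - 1"
  have "linear_op (\<lambda>v. br ((X @ [0])[n - 1 := v]))" by (rule linear_op_br_at) (use l n2 in auto)
  moreover have "(X @ [0])[n - 1 := v] = X @ [v]" for v using l by (simp add: list_update_append)
  ultimately show ?thesis by simp
qed

lemma ad_commutator:
  assumes lZ: "length Z = n - 1" and lX: "length X = n - 1"
  shows "br (Z @ [br (X @ [v])]) - br (X @ [br (Z @ [v])])
    = (\<Sum>i<n-1. br (X[i := br (Z @ [X!i])] @ [v]))"
proof -
  have "br (Z @ [br (X @ [v])]) = (\<Sum>l<n. br ((X @ [v])[l := br (Z @ [(X @ [v]) ! l])]))"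
    by (rule fundamental_identity) (use lZ lX n2 in auto)
  also have "\<dots> = (\<Sum>l<Suc (n-1). br ((X @ [v])[l := br (Z @ [(X @ [v]) ! l])]))" using n2 by simp
  also have "\<dots> = (\<Sum>l<n-1. br ((X @ [v])[l := br (Z @ [(X @ [v]) ! l])])) + br (X @ [br (Z @ [v])])"
    using lX by (simp add: nth_append list_update_append)
  also have "(\<Sum>l<n-1. br ((X @ [v])[l := br (Z @ [(X @ [v]) ! l])]))
      = (\<Sum>i<n-1. br (X[i := br (Z @ [X!i])] @ [v]))"
    by (rule sum.cong) (use lX in \<open>auto simp: nth_append list_update_append\<close>)
  finally show ?thesis by simp
qed

definition ops :: "('v \<Rightarrow> 'v) set" where
  "ops = {ad X | X. length X = n - 1} \<union> {mul x | x. True}"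

definition ops_der :: "nat \<Rightarrow> ('v \<Rightarrow> 'v) set" where
  "ops_der j = {ad X | X. length X = n - 1 \<and> (\<exists>i<n-1. X!i \<in> der j)} \<union> {mul x | x. x \<in> der j}"

definition ops_der2 :: "nat \<Rightarrow> ('v \<Rightarrow> 'v) set" where
  "ops_der2 j = ops_der (Suc j) \<union> {ad X | X. length X = n - 1 \<and>
       (\<exists>i k. i < n-1 \<and> k < n-1 \<and> i \<noteq> k \<and> X!i \<in> der j \<and> X!k \<in> der j)}"

lemma commutator_in_mono: "commutator_in S f g \<Longrightarrow> S \<subseteq> S' \<Longrightarrow> commutator_in S' f g"
  unfolding commutator_in_def by blast

lemma commutator_in_swap:
  assumes "commutator_in S g f" and neg: "\<And>h. h \<in> S \<Longrightarrow> (\<lambda>v. - h v) \<in> S"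
  shows "commutator_in S f g"
proof -
  obtain hs where hs: "set hs \<subseteq> S" "\<And>v. g (f v) - f (g v) = sum_list (map (\<lambda>h. h v) hs)"
    using assms(1) unfolding commutator_in_def by blast
  let ?hs = "map (\<lambda>h v. - h v) hs"
  have "set ?hs \<subseteq> S" using hs(1) neg by auto
  moreover have "f (g v) - g (f v) = sum_list (map (\<lambda>h. h v) ?hs)" for v
  proof -
    have "sum_list (map (\<lambda>h. h v) ?hs) = - sum_list (map (\<lambda>h. h v) hs)"
      by (induction hs) auto
    moreover have "f (g v) - g (f v) = - (g (f v) - f (g v))" by simp
    ultimately show ?thesis using hs(2)[of v] by simp
  qed
  ultimately show ?thesis unfolding commutator_in_def by blast
qed

lemma commutator_in_ad_ad:
  assumes lZ: "length Z = n - 1" and lX: "length X = n - 1"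
    and H: "\<And>i. i < n - 1 \<Longrightarrow> (ad (X[i := br (Z @ [X!i])])) \<in> S"
  shows "commutator_in S (ad Z) (ad X)"
  unfolding commutator_in_def
proof (intro exI conjI allI)
  let ?hs = "map (\<lambda>i v. br (X[i := br (Z @ [X!i])] @ [v])) [0..<n-1]"
  show "set ?hs \<subseteq> S" using H by auto
  fix v
  have "sum_list (map (\<lambda>h. h v) ?hs) = (\<Sum>i<n-1. br (X[i := br (Z @ [X!i])] @ [v]))"
    by (simp add: interv_sum_list_conv_sum_set_nat comp_def atLeast0LessThan)
  then show "br (Z @ [br (X @ [v])]) - br (X @ [br (Z @ [v])]) = sum_list (map (\<lambda>h. h v) ?hs)"
    using ad_commutator[OF lZ lX] by simp
qed

lemma commutator_in_ad_mul:
  assumes lZ: "length Z = n - 1" and H: "mul (br (Z @ [x])) \<in> S"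
  shows "commutator_in S (ad Z) (mul x)"
  unfolding commutator_in_def
proof (intro exI[of _ "[mul (br (Z @ [x]))]"] conjI allI)
  show "set [mul (br (Z @ [x]))] \<subseteq> S" using H by simp
  fix v
  show "br (Z @ [mul x v]) - mul x (br (Z @ [v])) = sum_list (map (\<lambda>h. h v) [mul (br (Z @ [x]))])"
  proof -
    have "br (Z @ [mul x v]) = mul x (br (Z @ [v])) + mul v (br (Z @ [x]))"
      by (rule leibniz_last[OF lZ])
    moreover have "mul v (br (Z @ [x])) = mul (br (Z @ [x])) v" by (rule mul_commute)
    ultimately show ?thesis by simp
  qed
qed

lemma commutator_in_mul_ad:
  assumes lX: "length X = n - 1" and H: "mul (- br (X @ [z])) \<in> S"
  shows "commutator_in S (mul z) (ad X)"
  unfolding commutator_in_def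
proof (intro exI[of _ "[mul (- br (X @ [z]))]"] conjI allI)
  show "set [mul (- br (X @ [z]))] \<subseteq> S" using H by simp
  fix v
  show "mul z (br (X @ [v])) - br (X @ [mul z v]) = sum_list (map (\<lambda>h. h v) [mul (- br (X @ [z]))])"
  proof -
    have "br (X @ [mul z v]) = mul z (br (X @ [v])) + mul v (br (X @ [z]))"
      by (rule leibniz_last[OF lX])
    moreover have "mul v (br (X @ [z])) = mul (br (X @ [z])) v" by (rule mul_commute)
    moreover have "mul (- br (X @ [z])) v = - mul (br (X @ [z])) v" by (rule mul_neg_left)
    ultimately show ?thesis by simp
  qed
qed

lemma commutator_in_mul_mul: "commutator_in S (mul x) (mul y)"
  unfolding commutator_in_def
proof (intro exI[of _ "[]"] conjI allI)
  fix v
  have "mul x (mul y v) = mul (mul x y) v" by (simp only: mul_assoc)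
  also have "\<dots> = mul (mul y x) v" by (simp only: mul_commute[of x y])
  also have "\<dots> = mul y (mul x v)" by (simp only: mul_assoc)
  finally show "mul x (mul y v) - mul y (mul x v) = sum_list (map (\<lambda>h. h v) [])" by simp
qed simp

lemma ad_mem_der_arg:
  "length Z = n - 1 \<Longrightarrow> p < n - 1 \<Longrightarrow> Z!p \<in> der j \<Longrightarrow> br (Z @ [w]) \<in> der j"
  by (rule br_mem_der[of _ p]) (auto simp: nth_append)

lemma ad_mem_der: "length X = n - 1 \<Longrightarrow> w \<in> der j \<Longrightarrow> br (X @ [w]) \<in> der j"
  using n2 by (intro br_mem_der[of _ "n - 1"]) (auto simp: nth_append)

lemma ad_mem_der_Suc:
  "length Z = n - 1 \<Longrightarrow> p < n - 1 \<Longrightarrow> Z!p \<in> der j \<Longrightarrow> w \<in> der j \<Longrightarrow> br (Z @ [w]) \<in> der (Suc j)"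
  using n2 by (intro br_mem_der_Suc_of_two[of _ p "n - 1"]) (auto simp: nth_append)

lemma ad_mem_der_Suc_args:
  "length Z = n - 1 \<Longrightarrow> p < n - 1 \<Longrightarrow> q < n - 1 \<Longrightarrow> p \<noteq> q \<Longrightarrow> Z!p \<in> der j \<Longrightarrow> Z!q \<in> der j
   \<Longrightarrow> br (Z @ [w]) \<in> der (Suc j)"
  by (intro br_mem_der_Suc_of_two[of _ p q]) (auto simp: nth_append)

lemma ad_in_ops_der:
  "length X = n - 1 \<Longrightarrow> i < n - 1 \<Longrightarrow> X!i \<in> der j \<Longrightarrow> ad X \<in> ops_der j"
  unfolding ops_der_def by blast

lemma ad_in_ops_der2: "length X = n - 1 \<Longrightarrow> i < n - 1 \<Longrightarrow> k < n - 1 \<Longrightarrow> i \<noteq> k \<Longrightarrow> X!i \<in> der j \<Longrightarrow> X!k \<in> der j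
   \<Longrightarrow> ad X \<in> ops_der2 j"
  unfolding ops_der2_def by blast

lemma mul_in_ops_der: "x \<in> der j \<Longrightarrow> mul x \<in> ops_der j"
  unfolding ops_der_def by blast

lemma ops_der_subset_ops_der2: "ops_der (Suc j) \<subseteq> ops_der2 j"
  unfolding ops_der2_def by blast

lemma ops_der_subset_ops: "ops_der j \<subseteq> ops"
  unfolding ops_der_def ops_def by blast

lemma ops_der2_subset_ops: "ops_der2 j \<subseteq> ops"
  using ops_der_subset_ops unfolding ops_der2_def ops_def by blast

lemma ops_der_cases:
  assumes "g \<in> ops_der j"
  obtains X i where "g = ad X" "length X = n - 1" "i < n - 1" "X!i \<in> der j"
    | x where "g = mul x" "x \<in> der j"
  using assms unfolding ops_der_def by blast

lemma ops_cases:
  assumes "g \<in> ops"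
  obtains X where "g = ad X" "length X = n - 1" | x where "g = mul x"
  using assms unfolding ops_def by blast

lemma ops_der2_cases:
  assumes "g \<in> ops_der2 j"
  obtains "g \<in> ops_der (Suc j)"
    | X i k where "g = ad X" "length X = n - 1" "i < n - 1" "k < n - 1" "i \<noteq> k"
        "X!i \<in> der j" "X!k \<in> der j"
  using assms unfolding ops_der2_def by blast

lemma ops_der_neg:
  assumes "h \<in> ops_der j"
  shows "(\<lambda>v. - h v) \<in> ops_der j"
  using assms
proof (cases rule: ops_der_cases)
  case (1 X i)
  let ?X = "X[i := - (X!i)]"
  have "(\<lambda>v. - h v) = ad ?X"
  proof
    fix v
    have l: "length (X @ [v]) = n" using 1 n2 by simp
    have "br ((X @ [v])[i := - ((X @ [v]) ! i)]) = - br ((X @ [v])[i := (X @ [v]) ! i])"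
      by (rule br_neg[OF l]) (use 1 n2 in simp)
    then show "- h v = br (?X @ [v])" using 1 by (simp add: nth_append list_update_append)
  qed
  moreover have "ad ?X \<in> ops_der j"
    by (rule ad_in_ops_der[of _ i]) (use 1 subspace_neg[OF subspace_der] in auto)
  ultimately show ?thesis by simp
next
  case (2 x)
  have "(\<lambda>v. - h v) = mul (- x)" using 2 by (auto simp: mul_neg_left)
  then show ?thesis using mul_in_ops_der[of "- x" j] subspace_neg[OF subspace_der] 2 by simp
qed

lemma commutator_in_ops_der:
  assumes f: "f \<in> ops" and g: "g \<in> ops_der j"
  shows "commutator_in (ops_der j) f g"
  using f
proof (cases rule: ops_cases)
  case (1 Z)
  show ?thesis using g
  proof (cases rule: ops_der_cases)
    case (1 X i)
    show ?thesis unfolding \<open>g = _\<close> \<open>f = _\<close>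
    proof (rule commutator_in_ad_ad[OF \<open>length Z = n - 1\<close> \<open>length X = n - 1\<close>])
      fix l assume l: "l < n - 1"
      let ?c = "br (Z @ [X!l])"
      show "ad (X[l := ?c]) \<in> ops_der j"
      proof (rule ad_in_ops_der[of _ i])
        show "length (X[l := ?c]) = n - 1" using 1 by simp
        show "i < n - 1" using 1 by simp
        show "X[l := ?c] ! i \<in> der j"
          using 1 ad_mem_der[OF \<open>length Z = n - 1\<close>, of "X!i"] by (cases "l = i") auto
      qed
    qed
  next
    case (2 x)
    show ?thesis unfolding \<open>g = _\<close> \<open>f = _\<close>
      by (rule commutator_in_ad_mul[OF \<open>length Z = n - 1\<close>])
        (rule mul_in_ops_der, rule ad_mem_der, use 1 2 in auto)
  qed
next
  case (2 z)
  show ?thesis using g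
  proof (cases rule: ops_der_cases)
    case (1 X i)
    show ?thesis unfolding \<open>g = _\<close> \<open>f = _\<close>
      by (rule commutator_in_mul_ad[OF \<open>length X = n - 1\<close>])
        (rule mul_in_ops_der, rule subspace_neg[OF subspace_der], rule ad_mem_der_arg, use 1 in auto)
  next
    case (2 x)
    show ?thesis unfolding \<open>g = _\<close> \<open>f = _\<close> by (rule commutator_in_mul_mul)
  qed
qed

lemma commutator_in_ops_der2:
  assumes f: "f \<in> ops" and g: "g \<in> ops_der2 j"
  shows "commutator_in (ops_der2 j) f g"
  using g
proof (cases rule: ops_der2_cases)
  case 1
  then show ?thesis
    using commutator_in_ops_der[OF f] commutator_in_mono ops_der_subset_ops_der2 by blast
next
  case (2 X i k)
  note Xf = this
  show ?thesis using f
  proof (cases rule: ops_cases)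
    case (1 Z)
    show ?thesis unfolding \<open>g = _\<close> \<open>f = _\<close>
    proof (rule commutator_in_ad_ad[OF \<open>length Z = n - 1\<close> \<open>length X = n - 1\<close>])
      fix l assume l: "l < n - 1"
      let ?c = "br (Z @ [X!l])"
      have m: "X[l := ?c] ! m \<in> der j" if "m = i \<or> m = k" for m
        using Xf ad_mem_der[OF \<open>length Z = n - 1\<close>, of "X!m"] that by (cases "l = m") auto
      show "ad (X[l := ?c]) \<in> ops_der2 j"
        by (rule ad_in_ops_der2[of _ i k]) (use Xf m in auto)
    qed
  next
    case (2 z)
    show ?thesis unfolding \<open>g = _\<close> \<open>f = _\<close>
    proof (rule commutator_in_mul_ad[OF \<open>length X = n - 1\<close>])
      have "br (X @ [z]) \<in> der (Suc j)" by (rule ad_mem_der_Suc_args[of X i k]) (use Xf in auto)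
      then show "mul (- br (X @ [z])) \<in> ops_der2 j"
        using mul_in_ops_der subspace_neg[OF subspace_der] ops_der_subset_ops_der2 by blast
    qed
  qed
qed

lemma commutator_ops_der_in_ops_der2:
  assumes f: "f \<in> ops_der j" and g: "g \<in> ops_der j"
  shows "commutator_in (ops_der2 j) f g"
  using f
proof (cases rule: ops_der_cases)
  case (1 Z p)
  note Zf = this
  show ?thesis using g
  proof (cases rule: ops_der_cases)
    case (1 X i)
    show ?thesis unfolding \<open>g = _\<close> \<open>f = _\<close>
    proof (rule commutator_in_ad_ad[OF \<open>length Z = n - 1\<close> \<open>length X = n - 1\<close>])
      fix l assume l: "l < n - 1"
      let ?c = "br (Z @ [X!l])"
      show "ad (X[l := ?c]) \<in> ops_der2 j"
      proof (cases "l = i")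
        case True
        have "?c \<in> der (Suc j)" using ad_mem_der_Suc[of Z p j "X!i"] Zf 1 True by auto
        then have "ad (X[l := ?c]) \<in> ops_der (Suc j)"
          by (intro ad_in_ops_der[of _ l]) (use 1 l in auto)
        then show ?thesis using ops_der_subset_ops_der2 by blast
      next
        case False
        have c: "?c \<in> der j" using ad_mem_der_arg[of Z p j "X!l"] Zf by auto
        show ?thesis by (rule ad_in_ops_der2[of _ l i]) (use 1 l False c in auto)
      qed
    qed
  next
    case (2 x)
    show ?thesis unfolding \<open>g = _\<close> \<open>f = _\<close>
    proof (rule commutator_in_ad_mul[OF \<open>length Z = n - 1\<close>])
      have "br (Z @ [x]) \<in> der (Suc j)" using ad_mem_der_Suc[of Z p j x] Zf 2 by auto
      then show "mul (br (Z @ [x])) \<in> ops_der2 j"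
        using mul_in_ops_der ops_der_subset_ops_der2 by blast
    qed
  qed
next
  case (2 z)
  note zf = this
  show ?thesis using g
  proof (cases rule: ops_der_cases)
    case (1 X i)
    show ?thesis unfolding \<open>g = _\<close> \<open>f = _\<close>
    proof (rule commutator_in_mul_ad[OF \<open>length X = n - 1\<close>])
      have "br (X @ [z]) \<in> der (Suc j)" using ad_mem_der_Suc[of X i j z] zf 1 by auto
      then show "mul (- br (X @ [z])) \<in> ops_der2 j"
        using mul_in_ops_der subspace_neg[OF subspace_der] ops_der_subset_ops_der2 by blast
    qed
  next
    case (2 x)
    show ?thesis unfolding \<open>g = _\<close> \<open>f = _\<close> by (rule commutator_in_mul_mul)
  qed
qed

lemma commutator_ops_der2_in_ops_der_Suc:
  assumes f: "f \<in> ops_der2 j" and g: "g \<in> ops_der2 j"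
  shows "commutator_in (ops_der (Suc j)) f g"
proof (cases "g \<in> ops_der (Suc j)")
  case True then show ?thesis using commutator_in_ops_der f ops_der2_subset_ops by blast
next
  case gF: False
  show ?thesis
  proof (cases "f \<in> ops_der (Suc j)")
    case True
    have "commutator_in (ops_der (Suc j)) g f"
      using commutator_in_ops_der True g ops_der2_subset_ops by blast
    then show ?thesis using commutator_in_swap ops_der_neg by blast
  next
    case False
    obtain Z p q where fZ: "f = ad Z" "length Z = n - 1" "p < n - 1" "q < n - 1" "p \<noteq> q"
        "Z!p \<in> der j" "Z!q \<in> der j"
      using f False by (cases rule: ops_der2_cases) auto
    obtain X i k where gX: "g = ad X" "length X = n - 1"
      using g gF by (cases rule: ops_der2_cases) auto
    show ?thesis unfolding fZ(1) gX(1)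
    proof (rule commutator_in_ad_ad[OF fZ(2) gX(2)])
      fix l assume l: "l < n - 1"
      let ?c = "br (Z @ [X!l])"
      have "?c \<in> der (Suc j)" by (rule ad_mem_der_Suc_args[of Z p q]) (use fZ in auto)
      then show "ad (X[l := ?c]) \<in> ops_der (Suc j)"
        by (intro ad_in_ops_der[of _ l]) (use gX l in auto)
    qed
  qed
qed

text \<open>The chain \<open>ops_der 0 \<supseteq> ops_der2 0 \<supseteq> ops_der 1 \<supseteq> \<dots>\<close>: the middle layers are needed because
  the commutator of two members of \<open>ops_der j\<close> only has two arguments in \<open>der j\<close>.\<close>

definition ops_chain :: "nat \<Rightarrow> ('v \<Rightarrow> 'v) set" where
  "ops_chain t = (if even t then ops_der (t div 2) else ops_der2 (t div 2))"

lemma ops_chain_subset_ops: "ops_chain t \<subseteq> ops"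
  unfolding ops_chain_def using ops_der_subset_ops ops_der2_subset_ops by auto

lemma ops_subset_ops_chain_0: "ops \<subseteq> ops_chain 0"
proof
  fix g assume "g \<in> ops"
  then show "g \<in> ops_chain 0"
  proof (cases rule: ops_cases)
    case (1 X)
    then show ?thesis unfolding ops_chain_def using ad_in_ops_der[of X 0 0] n2 by simp
  next
    case (2 x)
    then show ?thesis unfolding ops_chain_def using mul_in_ops_der[of x 0] by simp
  qed
qed

lemma commutator_ops_chain_Suc:
  assumes "f \<in> ops_chain t" "g \<in> ops_chain (Suc t)"
  shows "commutator_in (ops_chain (Suc t)) f g"
proof -
  have f: "f \<in> ops" using assms(1) ops_chain_subset_ops by blast
  show ?thesis
  proof (cases "even t")
    case True
    then show ?thesis using assms(2) commutator_in_ops_der2[OF f] by (simp add: ops_chain_def)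
  next
    case False
    then show ?thesis
      using assms(2) commutator_in_ops_der[OF f] by (simp add: ops_chain_def odd_Suc_div_two)
  qed
qed

lemma commutator_ops_chain:
  assumes "f \<in> ops_chain t" "g \<in> ops_chain t"
  shows "commutator_in (ops_chain (Suc t)) f g"
proof (cases "even t")
  case True
  then show ?thesis using assms commutator_ops_der_in_ops_der2 by (simp add: ops_chain_def)
next
  case False
  then show ?thesis
    using assms commutator_ops_der2_in_ops_der_Suc by (simp add: ops_chain_def odd_Suc_div_two)
qed

lemma ops_chain_vanishes:
  assumes solv: "der s = {0}" and g: "g \<in> ops_chain (2 * s)"
  shows "g v = 0"
proof -
  have "g \<in> ops_der s" using g unfolding ops_chain_def by simp
  then show ?thesis
  proof (cases rule: ops_der_cases)
    case (1 X i)
    have "br (X @ [v]) = 0" by (rule br_zero[of _ i]) (use 1 solv in \<open>auto simp: nth_append\<close>)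
    with 1 show ?thesis by simp
  next
    case (2 x)
    then show ?thesis using solv mul_zero_left by simp
  qed
qed

lemma common_eigenvector_ops:
  assumes W: "subspace W" and WU: "W \<noteq> UNIV"
    and invb: "\<And>X v. length X = n - 1 \<Longrightarrow> v \<in> W \<Longrightarrow> br (X @ [v]) \<in> W"
    and invm: "\<And>x v. v \<in> W \<Longrightarrow> mul x v \<in> W"
    and solv: "der s = {0}"
  obtains u where "u \<notin> W" "\<And>g. g \<in> ops \<Longrightarrow> \<exists>c. g u - c *s u \<in> W"
proof -
  have ops: "linear_op g \<and> (\<forall>w\<in>W. g w \<in> W)" if "g \<in> ops" for g
    using that by (cases rule: ops_cases) (use linear_op_ad invb linear_op_mul_right invm in auto)
  have "\<exists>u. u \<notin> W \<and> (\<forall>g\<in>ops_chain 0. \<exists>c. g u - c *s u \<in> W)"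
  proof (rule lie_theorem_mod[OF W WU, where T = "2 * s"])
    show "linear_op g \<and> (\<forall>w\<in>W. g w \<in> W)" if "g \<in> ops_chain t" for t g
      using ops that ops_chain_subset_ops by blast
    show "g v \<in> W" if "g \<in> ops_chain (2 * s)" for g v
      using ops_chain_vanishes[OF solv that] subspace_0[OF W] by simp
    show "commutator_in (ops_chain (Suc t)) f g"
      if "t < 2 * s" "f \<in> ops_chain t" "g \<in> ops_chain (Suc t)" for t f g
      using commutator_ops_chain_Suc that(2,3) .
    show "commutator_in (ops_chain (Suc t)) f g"
      if "t < 2 * s" "f \<in> ops_chain t" "g \<in> ops_chain t" for t f g
      using commutator_ops_chain that(2,3) .
  qed
  then show ?thesis using ops_subset_ops_chain_0 that by blast
qed

text \<open>Downward induction along the derived series: \<open>x \<cdot> x\<close> lies one step deeper than \<open>x\<close>, and its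
  eigenvalue is the square of that of \<open>x\<close>.\<close>

lemma mul_eigenvalue_zero:
  assumes W: "subspace W" and uW: "u \<notin> W"
    and invm: "\<And>x v. v \<in> W \<Longrightarrow> mul x v \<in> W"
    and evm: "\<And>x. \<exists>c. mul x u - c *s u \<in> W"
    and solv: "der s = {0}"
  shows "mul x u \<in> W"
proof -
  have "\<forall>x\<in>der (s - d). mul x u \<in> W" if "d \<le> s" for d
    using that
  proof (induction d)
    case 0 then show ?case using solv mul_zero_left subspace_0[OF W] by simp
  next
    case (Suc d)
    show ?case
    proof
      fix x assume x: "x \<in> der (s - Suc d)"
      obtain c where c: "mul x u - c *s u \<in> W" using evm by blast
      have "mul x (mul x u) - (c * c) *s u \<in> W"
        by (rule eigen_mod_comp[OF W linear_op_mul_right invm c c])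
      moreover have "mul x x \<in> der (s - d)"
        using mul_mem_der_Suc_of_two[OF x x] Suc.prems by (simp add: Suc_diff_Suc)
      then have "mul (mul x x) u \<in> W" using Suc by simp
      then have "mul x (mul x u) - 0 *s u \<in> W" by (simp add: mul_assoc)
      ultimately have "c * c = 0" using eigenvalue_mod_unique[OF W uW] by blast
      then have "c = 0" by simp
      then show "mul x u \<in> W" using c by simp
    qed
  qed
  from this[of s] show ?thesis by simp
qed

context
  fixes W u
  assumes W: "subspace W" and uW: "u \<notin> W"
    and invb: "\<And>X v. length X = n - 1 \<Longrightarrow> v \<in> W \<Longrightarrow> br (X @ [v]) \<in> W"
    and invm: "\<And>x v. v \<in> W \<Longrightarrow> mul x v \<in> W"
    and evb: "\<And>X. length X = n - 1 \<Longrightarrow> \<exists>c. br (X @ [u]) - c *s u \<in> W"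
    and evm0: "\<And>x. mul x u \<in> W"
begin

definition weight :: "'v list \<Rightarrow> 'k" where
  "weight X = (SOME c. br (X @ [u]) - c *s u \<in> W)"

lemma weight_eigen: "length X = n - 1 \<Longrightarrow> br (X @ [u]) - weight X *s u \<in> W"
  unfolding weight_def using evb by (rule someI_ex)

lemma weight_eqI: "length X = n - 1 \<Longrightarrow> br (X @ [u]) - c *s u \<in> W \<Longrightarrow> weight X = c"
  using eigenvalue_mod_unique[OF W uW weight_eigen] by blast

lemma weight_add:
  assumes l: "length X = n - 1" and i: "i < n - 1"
  shows "weight (X[i := x + y]) = weight (X[i := x]) + weight (X[i := y])"
proof (rule weight_eqI)
  show "length (X[i := x + y]) = n - 1" using l by simp
  have l': "length (X @ [u]) = n" using l n2 by simp
  have "br (X[i := x + y] @ [u]) = br (X[i := x] @ [u]) + br (X[i := y] @ [u])"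
    using br_add[OF l', of i x y] i l by (simp add: list_update_append)
  then show "br (X[i := x + y] @ [u]) - (weight (X[i := x]) + weight (X[i := y])) *s u \<in> W"
    using eigen_mod_add[OF W weight_eigen weight_eigen, of "X[i := x]" "X[i := y]"] l by simp
qed

lemma weight_adjacent_swap:
  assumes l: "length X = n - 1" and i: "Suc i < n - 1"
  shows "weight (X[i := X!Suc i, Suc i := X!i]) = - weight X"
proof (rule weight_eqI)
  show "length (X[i := X!Suc i, Suc i := X!i]) = n - 1" using l by simp
  have l': "length (X @ [u]) = n" using l n2 by simp
  have "br ((X @ [u])[i := (X @ [u])!Suc i, Suc i := (X @ [u])!i]) = - br (X @ [u])"
    by (rule br_adjacent_swap[OF l']) (use i in simp)
  then have "br (X[i := X!Suc i, Suc i := X!i] @ [u]) = - br (X @ [u])"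
    using i l by (simp add: list_update_append nth_append)
  then show "br (X[i := X!Suc i, Suc i := X!i] @ [u]) - (- weight X) *s u \<in> W"
    using eigen_mod_neg[OF W weight_eigen[OF l]] by simp
qed

lemma weight_swap: "length X = n - 1 \<Longrightarrow> i < n - 1 \<Longrightarrow> j < n - 1 \<Longrightarrow> i \<noteq> j
   \<Longrightarrow> weight (X[i := X!j, j := X!i]) = - weight X"
  by (rule adjacent_skew_swap[where N = "n - 1" and G = weight, OF weight_adjacent_swap _ weight_add])
    simp_all

text \<open>\<open>ad Z\<close> and \<open>ad Y\<close> act at \<open>u\<close> as scalars modulo \<open>W\<close>, so their commutator, which the
  fundamental identity expands into a sum of adjoint operators, has weight \<open>0\<close>.\<close>

lemma weight_fundamental_identity:
  assumes lZ: "length Z = n - 1" and lY: "length Y = n - 1"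
  shows "(\<Sum>i<n-1. weight (Y[i := br (Z @ [Y!i])])) = 0"
proof -
  have fZ: "linear_op (\<lambda>v. br (Z @ [v]))" by (rule linear_op_ad[OF lZ])
  have fY: "linear_op (\<lambda>v. br (Y @ [v]))" by (rule linear_op_ad[OF lY])
  have A: "br (Z @ [br (Y @ [u])]) - (weight Y * weight Z) *s u \<in> W"
    by (rule eigen_mod_comp[OF W fZ _ weight_eigen[OF lZ] weight_eigen[OF lY]]) (use invb lZ in auto)
  have B: "br (Y @ [br (Z @ [u])]) - (weight Z * weight Y) *s u \<in> W"
    by (rule eigen_mod_comp[OF W fY _ weight_eigen[OF lY] weight_eigen[OF lZ]]) (use invb lY in auto)
  have AB: "(br (Z @ [br (Y @ [u])]) - br (Y @ [br (Z @ [u])])) - 0 *s u \<in> W"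
    using eigen_mod_add[OF W A eigen_mod_neg[OF W B]] by (simp add: mult.commute)
  have S: "(\<Sum>i<n-1. br (Y[i := br (Z @ [Y!i])] @ [u]))
      - (\<Sum>i<n-1. weight (Y[i := br (Z @ [Y!i])])) *s u \<in> W"
    by (rule eigen_mod_sum[OF W]) (use weight_eigen lY in auto)
  show ?thesis using eigenvalue_mod_unique[OF W uW AB, unfolded ad_commutator[OF lZ lY], OF S] by simp
qed

lemma weight_uminus_first:
  assumes "length xs = n - 2" shows "weight ((- a) # xs) = - weight (a # xs)"
proof -
  have l: "length (a # xs) = n - 1" using assms n2 by simp
  have "weight ((a # xs)[0 := a + - a]) = weight ((a # xs)[0 := a]) + weight ((a # xs)[0 := - a])"
    by (rule weight_add[OF l]) (use n2 in simp)
  moreover have "weight ((a # xs)[0 := 0]) = weight ((a # xs)[0 := 0]) + weight ((a # xs)[0 := 0])"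
    using weight_add[OF l, of 0 0 0] n2 by simp
  ultimately have "weight ((- a) # xs) + weight (a # xs) = 0" by simp
  then show ?thesis by (simp add: eq_neg_iff_add_eq_0)
qed

lemma weight_br_expand_last:
  assumes Z: "length Z = n - 1" and xs: "length xs = n - 2"
  shows "weight (br (Z @ [y]) # xs) = (\<Sum>j<n-2. weight (br (Z @ [xs!j]) # xs[j := y]))"
proof -
  have lY: "length (y # xs) = n - 1" using xs n2 by simp
  have swap: "weight (y # xs[j := br (Z @ [xs!j])]) = - weight (br (Z @ [xs!j]) # xs[j := y])"
    if j: "j < n - 2" for j
  proof -
    let ?X = "y # xs[j := br (Z @ [xs!j])]"
    have "weight (?X[0 := ?X ! Suc j, Suc j := ?X ! 0]) = - weight ?X"
      by (rule weight_swap) (use j xs n2 in auto)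
    moreover have "?X[0 := ?X ! Suc j, Suc j := ?X ! 0] = br (Z @ [xs!j]) # xs[j := y]"
      using j xs by simp
    ultimately show ?thesis by simp
  qed
  have "0 = (\<Sum>i<Suc (n-2). weight ((y # xs)[i := br (Z @ [(y # xs)!i])]))"
    using weight_fundamental_identity[OF Z lY] n2 by (simp add: Suc_diff_Suc numeral_2_eq_2)
  also have "\<dots> = weight (br (Z @ [y]) # xs) + (\<Sum>j<n-2. weight (y # xs[j := br (Z @ [xs!j])]))"
    by (subst sum.lessThan_Suc_shift) simp
  also have "(\<Sum>j<n-2. weight (y # xs[j := br (Z @ [xs!j])]))
      = - (\<Sum>j<n-2. weight (br (Z @ [xs!j]) # xs[j := y]))"
    using swap by (simp add: sum_negf)
  finally show ?thesis by (simp add: eq_neg_iff_add_eq_0)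
qed

lemma fi_skew_form_weight_br:
  assumes nm: "n = Suc (Suc m)"
  shows "fi_skew_form m (\<lambda>zs xs. weight (br zs # xs))"
proof
  fix zs xs :: "'v list" and i :: nat and x y :: 'v
  assume a: "length zs = Suc (Suc m)" "length xs = m"
  have l: "length (br zs # xs) = n - 1" using a nm by simp
  show "weight (br (zs[i := x + y]) # xs)
      = weight (br (zs[i := x]) # xs) + weight (br (zs[i := y]) # xs)"
    if "i < Suc (Suc m)"
    using br_add[of zs i x y] weight_add[OF l, of 0 "br (zs[i := x])" "br (zs[i := y])"] a that nm
    by simp
  show "weight (br zs # xs[i := x + y]) = weight (br zs # xs[i := x]) + weight (br zs # xs[i := y])"
    if "i < m"
    using weight_add[OF l, of "Suc i" x y] a that nm by simp
  show "weight (br (zs[i := zs ! Suc i, Suc i := zs ! i]) # xs) = - weight (br zs # xs)"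
    if "Suc i < Suc (Suc m)"
    using br_adjacent_swap[of zs i] weight_uminus_first[of xs "br zs"] a that nm by simp
  show "weight (br zs # xs[i := xs ! Suc i, Suc i := xs ! i]) = - weight (br zs # xs)"
    if "Suc i < m"
    using weight_adjacent_swap[OF l, of "Suc i"] a that nm by simp
next
  fix Z xs :: "'v list" and y :: 'v
  assume "length Z = Suc m" "length xs = m"
  then show "weight (br (Z @ [y]) # xs) = (\<Sum>j<m. weight (br (Z @ [xs ! j]) # xs[j := y]))"
    using weight_br_expand_last[of Z xs y] nm by simp
qed

lemma weight_br_zero:
  assumes "length zs = n" "length xs = n - 2"
  shows "weight (br zs # xs) = 0"
proof -
  obtain m where "n = Suc (Suc m)" using n2 by (metis add_2_eq_Suc le_Suc_ex)
  then show ?thesis using fi_skew_form_zero[OF fi_skew_form_weight_br] assms by simp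
qed

lemma psquare_br_mem:
  assumes a: "a \<in> square" and lx: "length xs = n - 2"
  shows "br (a # xs @ [u]) \<in> W"
proof -
  have l0: "length (0 # xs @ [u]) = n" using lx n2 by simp
  have lin0: "linear_op (\<lambda>a. br ((0 # xs @ [u])[0 := a]))"
    by (rule linear_op_br_at[OF l0]) (use n2 in simp)
  have sp: "a \<in> span ({br xs | xs. length xs = n} \<union> {mul a b | a b. True})"
    using a unfolding psquare_def .
  have "(\<lambda>a. br ((0 # xs @ [u])[0 := a])) a \<in> W"
  proof (rule linear_op_span_mem[OF lin0 W _ sp])
    fix x assume "x \<in> {br xs | xs. length xs = n} \<union> {mul a b | a b. True}"
    then consider (B) zs where "x = br zs" "length zs = n" | (M) b c where "x = mul b c" by blast
    then show "br ((0 # xs @ [u])[0 := x]) \<in> W"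
    proof cases
      case B
      have lX: "length (br zs # xs) = n - 1" using lx n2 by simp
      have "br ((br zs # xs) @ [u]) - weight (br zs # xs) *s u \<in> W" by (rule weight_eigen[OF lX])
      then show ?thesis using weight_br_zero[OF B(2) lx] B(1) by simp
    next
      case M
      have lt: "length (xs @ [u]) + 1 = n" using lx n2 by simp
      have lc: "length (c # xs) = n - 1" and lb: "length (b # xs) = n - 1" using lx n2 by auto
      have e: "br (mul b c # xs @ [u]) = mul b (br (c # xs @ [u])) + mul c (br (b # xs @ [u]))"
        by (rule leibniz[OF lt])
      have t1: "mul b (br (c # xs @ [u])) - (weight (c # xs) * 0) *s u \<in> W"
        using eigen_mod_comp[OF W linear_op_mul_right invm _ weight_eigen[OF lc], of b 0] evm0 by simp
      have t2: "mul c (br (b # xs @ [u])) - (weight (b # xs) * 0) *s u \<in> W"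
        using eigen_mod_comp[OF W linear_op_mul_right invm _ weight_eigen[OF lb], of c 0] evm0 by simp
      have "mul b (br (c # xs @ [u])) \<in> W" using t1 by simp
      moreover have "mul c (br (b # xs @ [u])) \<in> W" using t2 by simp
      ultimately show ?thesis using M e subspace_add[OF W] by simp
    qed
  qed
  then show ?thesis by simp
qed

end

definition invariant_subspace :: "'v set \<Rightarrow> bool" where
  "invariant_subspace W \<longleftrightarrow> subspace W \<and> (\<forall>X v. length X = n - 1 \<longrightarrow> v \<in> W \<longrightarrow> br (X @ [v]) \<in> W)
     \<and> (\<forall>x v. v \<in> W \<longrightarrow> mul x v \<in> W)"

lemma invariant_subspace_zero: "invariant_subspace {0}"
  unfolding invariant_subspace_def using endo.linear_0[OF linear_op_ad] mul_zero_right
  by (auto simp: subspace_def)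

lemma eigenvector_square_trivial:
  assumes W: "invariant_subspace W" and WU: "W \<noteq> UNIV" and solv: "der s = {0}"
  obtains u where "u \<notin> W" "\<And>X. length X = n - 1 \<Longrightarrow> \<exists>c. br (X @ [u]) - c *s u \<in> W"
    "\<And>x. mul x u \<in> W" "\<And>a xs. a \<in> square \<Longrightarrow> length xs = n - 2 \<Longrightarrow> br (a # xs @ [u]) \<in> W"
proof -
  have sW: "subspace W"
    and invb: "\<And>X v. length X = n - 1 \<Longrightarrow> v \<in> W \<Longrightarrow> br (X @ [v]) \<in> W"
    and invm: "\<And>x v. v \<in> W \<Longrightarrow> mul x v \<in> W"
    using W unfolding invariant_subspace_def by blast+
  obtain u where uW: "u \<notin> W" and ev: "\<And>g. g \<in> ops \<Longrightarrow> \<exists>c. g u - c *s u \<in> W"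
    using common_eigenvector_ops[OF sW WU invb invm solv] by blast
  have evb: "\<exists>c. br (X @ [u]) - c *s u \<in> W" if "length X = n - 1" for X
  proof -
    have "ad X \<in> ops" unfolding ops_def using that by blast
    then show ?thesis using ev by blast
  qed
  have evm: "\<exists>c. mul x u - c *s u \<in> W" for x
  proof -
    have "mul x \<in> ops" unfolding ops_def by blast
    then show ?thesis using ev by blast
  qed
  have evm0: "mul x u \<in> W" for x by (rule mul_eigenvalue_zero[OF sW uW invm evm solv])
  show ?thesis
    using psquare_br_mem[OF sW uW invb invm evb evm0] uW evb evm0 that by blast
qed

text \<open>The lower central series of \<open>P\<^sup>2\<close> with the two distinguished arguments of the bracket
  allowed in any position; this is the form in which it descends the flag.\<close>

primrec square_lower :: "nat \<Rightarrow> 'v set" where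
  "square_lower 0 = UNIV"
| "square_lower (Suc k) = span
     ({br zs | zs. length zs = n
        \<and> (\<exists>i j. i < n \<and> j < n \<and> i \<noteq> j \<and> zs!i \<in> square \<and> zs!j \<in> square_lower k)}
      \<union> {mul a v | a v. a \<in> square \<and> v \<in> square_lower k})"

lemma plower_subset_square_lower: "plower scl n br mul square k \<subseteq> square_lower k"
proof (induction k)
  case (Suc k)
  have "\<exists>zs. br (a # b # xs) = br zs \<and> length zs = n
      \<and> (\<exists>i j. i < n \<and> j < n \<and> i \<noteq> j \<and> zs!i \<in> square \<and> zs!j \<in> square_lower k)"
    if "a \<in> square_lower k" "b \<in> square" "length xs = n - 2" for a b xs
    using that n2 by (intro exI[of _ "a # b # xs"] conjI exI[of _ 1] exI[of _ 0]) auto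
  then show ?case unfolding plower.simps square_lower.simps
    using Suc.IH mul_commute by (intro span_mono) blast
qed simp

lemma span_insert_decompose:
  assumes "subspace W" "v \<in> span (insert u W)"
  obtains c w where "w \<in> W" "v = w + c *s u"
proof -
  obtain c where "v - c *s u \<in> W"
    using assms span_breakdown_eq span_eq_iff by metis
  then show ?thesis using that[of "v - c *s u" c] by simp
qed

lemma invariant_subspace_extend:
  assumes W: "invariant_subspace W"
    and evb: "\<And>X. length X = n - 1 \<Longrightarrow> \<exists>c. br (X @ [u]) - c *s u \<in> W"
    and evm0: "\<And>x. mul x u \<in> W"
  shows "invariant_subspace (span (insert u W))"
proof -
  let ?W' = "span (insert u W)"
  have sW: "subspace W"
    and invb: "\<And>X v. length X = n - 1 \<Longrightarrow> v \<in> W \<Longrightarrow> br (X @ [v]) \<in> W"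
    and invm: "\<And>x v. v \<in> W \<Longrightarrow> mul x v \<in> W"
    using W unfolding invariant_subspace_def by blast+
  have inc: "w + c *s u \<in> ?W'" if "w \<in> W" for w c
    using that by (intro span_add span_scale) (auto intro: span_base)
  show ?thesis unfolding invariant_subspace_def
  proof (intro conjI allI impI subspace_span)
    fix X :: "'v list" and v :: 'v assume X: "length X = n - 1" and v: "v \<in> ?W'"
    obtain c w where w: "w \<in> W" "v = w + c *s u" using span_insert_decompose[OF sW v] by blast
    obtain d where d: "br (X @ [u]) - d *s u \<in> W" using evb[OF X] by blast
    have "br (X @ [v]) = (br (X @ [w]) + c *s (br (X @ [u]) - d *s u)) + (c * d) *s u"
      using w endo.linear_add[OF linear_op_ad[OF X]] endo.linear_scale[OF linear_op_ad[OF X]]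
      by (simp add: scale_right_diff_distrib)
    moreover have "br (X @ [w]) + c *s (br (X @ [u]) - d *s u) \<in> W"
      using invb[OF X w(1)] d subspace_add[OF sW] subspace_scale[OF sW] by blast
    ultimately show "br (X @ [v]) \<in> ?W'" using inc by simp
  next
    fix x v :: 'v assume v: "v \<in> ?W'"
    obtain c w where w: "w \<in> W" "v = w + c *s u" using span_insert_decompose[OF sW v] by blast
    have "mul x v = mul x w + c *s mul x u" using w by (simp add: mul_add_right mul_scale_right)
    moreover have "mul x w + c *s mul x u \<in> W"
      using invm[OF w(1)] evm0 subspace_add[OF sW] subspace_scale[OF sW] by blast
    ultimately show "mul x v \<in> ?W'" using span_base[of _ "insert u W"] by auto
  qed
qed

lemma square_lower_Suc_subset:
  assumes W: "invariant_subspace W"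
    and evm0: "\<And>x. mul x u \<in> W"
    and sq: "\<And>a xs. a \<in> square \<Longrightarrow> length xs = n - 2 \<Longrightarrow> br (a # xs @ [u]) \<in> W"
    and k: "square_lower k \<subseteq> span (insert u W)"
  shows "square_lower (Suc k) \<subseteq> W"
  unfolding square_lower.simps
proof (rule span_minimal)
  have sW: "subspace W"
    and invb: "\<And>X v. length X = n - 1 \<Longrightarrow> v \<in> W \<Longrightarrow> br (X @ [v]) \<in> W"
    and invm: "\<And>x v. v \<in> W \<Longrightarrow> mul x v \<in> W"
    using W unfolding invariant_subspace_def by blast+
  then show "subspace W" by simp
  have br_last: "br (X @ [v]) \<in> W" if X: "length X = n - 1" "X \<noteq> []" "hd X \<in> square"
    and v: "v \<in> square_lower k" for X v
  proof -
    obtain c w where w: "w \<in> W" "v = w + c *s u" using span_insert_decompose[OF sW] v k by blast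
    have "br (hd X # tl X @ [u]) \<in> W" using sq[OF X(3)] X(1) by simp
    then have "br (X @ [u]) \<in> W" using X(2) by (metis append_Cons list.collapse)
    moreover have "br (X @ [v]) = br (X @ [w]) + c *s br (X @ [u])"
      using w endo.linear_add[OF linear_op_ad[OF X(1)]] endo.linear_scale[OF linear_op_ad[OF X(1)]]
      by simp
    ultimately show ?thesis using invb[OF X(1) w(1)] subspace_add[OF sW] subspace_scale[OF sW] by simp
  qed
  have br_mem: "br zs \<in> W" if B: "length zs = n" "i < n" "j < n" "i \<noteq> j" "zs!i \<in> square"
    "zs!j \<in> square_lower k" for zs i j
  proof (rule br_mem_move_two_entries[where p = 0 and q = "n - 1", OF _ B(1-4)])
    show "\<And>x. x \<in> W \<Longrightarrow> - x \<in> W" using subspace_neg[OF sW] .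
    show "0 < n" "n - 1 < n" "0 \<noteq> n - 1" using n2 by auto
    fix zs' assume l: "length zs' = n" and e0: "zs'!0 = zs!i" and e1: "zs'!(n-1) = zs!j"
    define X where "X = take (n - 1) zs'"
    have lX: "length X = n - 1" and X: "X \<noteq> []" "hd X = zs!i"
      unfolding X_def using l e0 n2 by (cases zs'; auto)+
    have "zs' = X @ [zs!j]" unfolding X_def using take_snoc_nth[of zs' "n - 1"] l e1 n2 by simp
    then show "br zs' \<in> W" using br_last[OF lX X(1)] X(2) B(5,6) by simp
  qed
  have mul_mem: "mul a v \<in> W" if v: "v \<in> square_lower k" for a v
  proof -
    obtain c w where w: "w \<in> W" "v = w + c *s u" using span_insert_decompose[OF sW] k v by blast
    have "mul a v = mul a w + c *s mul a u" using w by (simp add: mul_add_right mul_scale_right)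
    then show ?thesis using invm[OF w(1)] evm0 subspace_add[OF sW] subspace_scale[OF sW] by simp
  qed
  show "{br zs |zs. length zs = n
        \<and> (\<exists>i j. i < n \<and> j < n \<and> i \<noteq> j \<and> zs!i \<in> square \<and> zs!j \<in> square_lower k)}
      \<union> {mul a v |a v. a \<in> square \<and> v \<in> square_lower k} \<subseteq> W"
    using br_mem mul_mem by blast
qed

lemma square_lower_below_invariant:
  assumes solv: "der s = {0}"
  shows "invariant_subspace W \<Longrightarrow> \<exists>k. square_lower k \<subseteq> W"
proof (induction "dim (UNIV :: 'v set) - dim W" arbitrary: W rule: less_induct)
  case less
  show ?case
  proof (cases "W = UNIV")
    case True then show ?thesis by (intro exI[of _ 0]) simp
  next
    case False
    obtain u where uW: "u \<notin> W" and evb: "\<And>X. length X = n - 1 \<Longrightarrow> \<exists>c. br (X @ [u]) - c *s u \<in> W"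
      and evm0: "\<And>x. mul x u \<in> W"
      and sq: "\<And>a xs. a \<in> square \<Longrightarrow> length xs = n - 2 \<Longrightarrow> br (a # xs @ [u]) \<in> W"
      using eigenvector_square_trivial[OF less.prems False solv] by blast
    let ?W' = "span (insert u W)"
    have sW: "subspace W" using less.prems unfolding invariant_subspace_def by blast
    have "dim W < dim ?W'"
    proof (rule dim_psubset)
      have "span ?W' = ?W'" "span W = W" using sW by simp_all
      then show "span W \<subset> span ?W'" using uW span_superset[of "insert u W"] by blast
    qed
    moreover have "dim ?W' \<le> dim (UNIV :: 'v set)" by (rule dim_subset) simp
    ultimately obtain k where "square_lower k \<subseteq> ?W'"
      using less.hyps invariant_subspace_extend[OF less.prems evb evm0] by force
    then show ?thesis using square_lower_Suc_subset[OF less.prems evm0 sq] by blast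
  qed
qed

lemma psolvable_imp_pnilpotent_square:
  assumes solv: "der s = {0}"
  shows "pnilpotent scl n br mul square"
proof -
  obtain k where k: "square_lower k \<subseteq> {0}"
    using square_lower_below_invariant[OF solv invariant_subspace_zero] by blast
  have "plower scl n br mul square k \<subseteq> {0}" using plower_subset_square_lower k by blast
  moreover have "0 \<in> plower scl n br mul square k"
    by (cases k) (simp_all add: psquare_def span_zero)
  ultimately have "plower scl n br mul square k = {0}" by blast
  then show ?thesis unfolding pnilpotent_def by blast
qed

end

lemma finite_span_imp_finite_dimensional:
  assumes vs: "vector_space scl" and B: "finite B" "module.span scl B = UNIV"
  obtains B' where "finite_dimensional_vector_space scl B'"
proof -
  interpret vector_space scl by (rule vs)
  obtain B' where B': "B' \<subseteq> B" "independent B'" "B \<subseteq> span B'"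
    using maximal_independent_subset[of B] by blast
  have "span B' = UNIV" using B(2) span_minimal[OF B'(3) subspace_span] by blast
  then have "finite_dimensional_vector_space scl B'"
    using B'(1,2) B(1) vs finite_subset
    by (unfold_locales) auto
  then show ?thesis using that by blast
qed

theorem proposition5p9:
  fixes scl :: "'k::{alg_closed_field, field_char_0} \<Rightarrow> 'v::ab_group_add \<Rightarrow> 'v"
    and n :: nat and br :: "'v list \<Rightarrow> 'v" and mul :: "'v \<Rightarrow> 'v \<Rightarrow> 'v"
  assumes "n \<ge> 2"
    and "poisson_nlie scl n br mul"
    and "\<exists>B. finite B \<and> module.span scl B = UNIV"
  shows "psolvable scl n br mul UNIV \<longleftrightarrow> pnilpotent scl n br mul (psquare scl n br mul)"
proof -
  have vs: "vector_space scl" using assms(2) unfolding poisson_nlie_def by blast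
  then obtain B where "finite_dimensional_vector_space scl B"
    using assms(3) finite_span_imp_finite_dimensional by blast
  then have "fd_poisson_nlie scl B n br mul"
    using assms(1,2) unfolding fd_poisson_nlie_def fd_poisson_nlie_axioms_def char0_alg_closed_vector_space_def
    by blast
  then show ?thesis
    using fd_poisson_nlie.psolvable_imp_pnilpotent_square
      vector_space.pnilpotent_square_imp_psolvable[OF vs assms(1)]
    unfolding psolvable_def by blast
qed

end
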